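(* Let $D$ be a domain in $\mathbb{C}^2$. If $\eta_D\in\mathcal M(D)$ is a continuous pseudometric, then $\widetilde{\mathbb W}\eta_D$ is upper semicontinuous on $D\times\mathbb{C}^2$.
   Context: A pseudometric on a domain $D\subset\mathbb{C}^n$ is a function $\eta:D\times\mathbb{C}^n\to[0,\infty)$ with $\eta(a;\lambda X)=|\lambda|\eta(a;X)$ for $\lambda\in\mathbb{C}$. $\mathcal M(D)$: pseudometrics $\eta$ on $D$ such that for every $a\in D$ there are $M,r>0$ with $\eta(z;X)\le M\|X\|$ for $z$ in the Euclidean ball $\mathbb{B}(a,r)\subset D$, $X\in\mathbb{C}^n$. Wu pseudometric: for $\eta\in\mathcal M(D)$ and $a\in D$, let $\widehat\eta(a;X)=\sup p(X)$ over all $\mathbb{C}$-seminorms $p\le\eta(a;\cdot)$. Let $V_\eta(a)=\{X:\widehat\eta(a;X)=0\}$, $U_\eta(a)$ its orthogonal complement (standard Hermitian product), $m(\eta,a)=\dim U_\eta(a)$. Let $\mathcal F(\eta,a)$ be the set of positive semidefinite Hermitian forms $s$ on $\mathbb{C}^n$ with $\sqrt{s(X,X)}\le\eta(a;X)$ for all $X$, ordered by $\alpha\prec\beta$ iff $\det[\alpha(e_j,e_k)]\le\det[\beta(e_j,e_k)]$ for a basis $(e_j)$ of $U_\eta(a)$; it has a unique maximal element $s(\eta,a)$. Set $\widetilde{\mathbb W}\eta(a;X)=\sqrt{s(\eta,a)(X,X)}$. *)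

theory Defs
  imports "HOL-Analysis.Analysis"
begin

text \<open>The space C^2 is the type complex^2 (Euclidean norm).
  Pseudometrics are functions eta :: complex^2 => complex^2 => real, eta a X.\<close>

type_synonym c2 = "complex ^ 2"

definition herm :: "c2 \<Rightarrow> c2 \<Rightarrow> complex" where
  "herm X Y = (\<Sum>i\<in>UNIV. X $ i * cnj (Y $ i))"

definition is_domain :: "c2 set \<Rightarrow> bool" where
  "is_domain D \<longleftrightarrow> open D \<and> connected D \<and> D \<noteq> {}"

definition pseudometric_on :: "c2 set \<Rightarrow> (c2 \<Rightarrow> c2 \<Rightarrow> real) \<Rightarrow> bool" where
  "pseudometric_on D \<eta> \<longleftrightarrow>
     (\<forall>a\<in>D. \<forall>X. 0 \<le> \<eta> a X) \<and>
     (\<forall>a\<in>D. \<forall>X. \<forall>c::complex. \<eta> a (c *s X) = norm c * \<eta> a X)"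

definition classM :: "c2 set \<Rightarrow> (c2 \<Rightarrow> c2 \<Rightarrow> real) set" where
  "classM D = {\<eta>. pseudometric_on D \<eta> \<and>
     (\<forall>a\<in>D. \<exists>M r. M > 0 \<and> r > 0 \<and> ball a r \<subseteq> D \<and>
        (\<forall>z\<in>ball a r. \<forall>X. \<eta> z X \<le> M * norm X))}"

definition cseminorm :: "(c2 \<Rightarrow> real) \<Rightarrow> bool" where
  "cseminorm p \<longleftrightarrow> (\<forall>X Y. p (X + Y) \<le> p X + p Y) \<and>
     (\<forall>X. \<forall>c::complex. p (c *s X) = norm c * p X)"

definition hat :: "(c2 \<Rightarrow> c2 \<Rightarrow> real) \<Rightarrow> c2 \<Rightarrow> c2 \<Rightarrow> real" where
  "hat \<eta> a X = Sup {p X | p. cseminorm p \<and> (\<forall>Y. p Y \<le> \<eta> a Y)}"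

definition Vset :: "(c2 \<Rightarrow> c2 \<Rightarrow> real) \<Rightarrow> c2 \<Rightarrow> c2 set" where
  "Vset \<eta> a = {X. hat \<eta> a X = 0}"

definition Uset :: "(c2 \<Rightarrow> c2 \<Rightarrow> real) \<Rightarrow> c2 \<Rightarrow> c2 set" where
  "Uset \<eta> a = {Y. \<forall>X\<in>Vset \<eta> a. herm Y X = 0}"

definition cbasis :: "c2 set \<Rightarrow> nat \<Rightarrow> (nat \<Rightarrow> c2) \<Rightarrow> bool" where
  "cbasis U m e \<longleftrightarrow>
     (\<forall>c::nat \<Rightarrow> complex. (\<Sum>j<m. c j *s e j) = 0 \<longrightarrow> (\<forall>j<m. c j = 0)) \<and>
     U = {(\<Sum>j<m. c j *s e j) | c. True}"

definition Ubasis :: "(c2 \<Rightarrow> c2 \<Rightarrow> real) \<Rightarrow> c2 \<Rightarrow> nat \<times> (nat \<Rightarrow> c2)" where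
  "Ubasis \<eta> a = (SOME (m, e). cbasis (Uset \<eta> a) m e)"

definition mdim :: "(c2 \<Rightarrow> c2 \<Rightarrow> real) \<Rightarrow> c2 \<Rightarrow> nat" where
  "mdim \<eta> a = fst (Ubasis \<eta> a)"

definition psd_herm_form :: "(c2 \<Rightarrow> c2 \<Rightarrow> complex) \<Rightarrow> bool" where
  "psd_herm_form s \<longleftrightarrow>
     (\<forall>X Y Z. s (X + Y) Z = s X Z + s Y Z) \<and>
     (\<forall>X Z. \<forall>c::complex. s (c *s X) Z = c * s X Z) \<and>
     (\<forall>X Y. s Y X = cnj (s X Y)) \<and>
     (\<forall>X. Im (s X X) = 0 \<and> 0 \<le> Re (s X X))"

definition Fset :: "(c2 \<Rightarrow> c2 \<Rightarrow> real) \<Rightarrow> c2 \<Rightarrow> (c2 \<Rightarrow> c2 \<Rightarrow> complex) set" where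
  "Fset \<eta> a = {s. psd_herm_form s \<and> (\<forall>X. sqrt (Re (s X X)) \<le> \<eta> a X)}"

definition gram_det :: "(c2 \<Rightarrow> c2 \<Rightarrow> complex) \<Rightarrow> nat \<Rightarrow> (nat \<Rightarrow> c2) \<Rightarrow> complex" where
  "gram_det \<alpha> m e =
     (\<Sum>p\<in>{p. p permutes {..<m}}. of_int (sign p) * (\<Prod>j<m. \<alpha> (e j) (e (p j))))"

definition Fle :: "(c2 \<Rightarrow> c2 \<Rightarrow> real) \<Rightarrow> c2 \<Rightarrow>
    (c2 \<Rightarrow> c2 \<Rightarrow> complex) \<Rightarrow> (c2 \<Rightarrow> c2 \<Rightarrow> complex) \<Rightarrow> bool" where
  "Fle \<eta> a \<alpha> \<beta> \<longleftrightarrow>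
     (case Ubasis \<eta> a of (m, e) \<Rightarrow> Re (gram_det \<alpha> m e) \<le> Re (gram_det \<beta> m e))"

definition smax :: "(c2 \<Rightarrow> c2 \<Rightarrow> real) \<Rightarrow> c2 \<Rightarrow> (c2 \<Rightarrow> c2 \<Rightarrow> complex)" where
  "smax \<eta> a = (THE s. s \<in> Fset \<eta> a \<and> (\<forall>t\<in>Fset \<eta> a. Fle \<eta> a t s))"

definition Wtilde :: "(c2 \<Rightarrow> c2 \<Rightarrow> real) \<Rightarrow> c2 \<Rightarrow> c2 \<Rightarrow> real" where
  "Wtilde \<eta> a X = sqrt (Re (smax \<eta> a X X))"

definition upper_semicontinuous_on :: "('a::topological_space) set \<Rightarrow> ('a \<Rightarrow> real) \<Rightarrow> bool" where
  "upper_semicontinuous_on S f \<longleftrightarrow>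
     (\<forall>x\<in>S. \<forall>e>0. \<forall>\<^sub>F y in at x within S. f y < f x + e)"

end

theory Submission
  imports Defs
begin

text \<open>The maximal form \<open>s(\<eta>, a)\<close> only depends on the Wu seminorm \<open>N = hat \<eta> a\<close>, and the
  kernel of \<open>N\<close> is \<open>\<complex>\<^sup>2\<close>, a line or \<open>0\<close>. If \<open>N = 0\<close> the only admissible form is \<open>0\<close>. If the
  kernel is the line through \<open>v\<close>, every admissible form is a rank-one form with kernel \<open>v\<close>, and
  \<open>s(\<eta>, a)\<close> is the largest of them, so it dominates every admissible form. If \<open>N\<close> is
  definite, \<open>s(\<eta>, a)\<close> maximises the Gram determinant on the compact convex set of admissible
  forms, uniquely because the determinant is strictly concave there.

  Upper semicontinuity is checked along sequences \<open>(b\<^sub>k, Y\<^sub>k) \<rightarrow> (a, X)\<close>. The forms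
  \<open>s(\<eta>, b\<^sub>k)\<close> are bounded, so a subsequence converges to a form \<open>s\<close> admissible at \<open>a\<close>. In the
  first two cases \<open>s\<close> is dominated by \<open>s(\<eta>, a)\<close>. In the definite case, continuity of \<open>\<eta>\<close>
  makes \<open>\<rho>\<^sup>2 s(\<eta>, a)\<close> admissible at \<open>b\<^sub>k\<close> for large \<open>k\<close> and every \<open>\<rho> < 1\<close>, hence
  \<open>det s \<ge> det s(\<eta>, a)\<close> and \<open>s = s(\<eta>, a)\<close>.\<close>

section \<open>Coordinates on \<open>\<complex>\<^sup>2\<close>\<close>

definition unit1 :: c2 where "unit1 = axis 1 1"
definition unit2 :: c2 where "unit2 = axis 2 1"

definition det2 :: "c2 \<Rightarrow> c2 \<Rightarrow> complex" where
  "det2 u w = u$1 * w$2 - u$2 * w$1"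

lemma unit_nth [simp]: "unit1$1 = 1" "unit1$2 = 0" "unit2$1 = 0" "unit2$2 = 1"
  by (simp_all add: unit1_def unit2_def axis_def)

lemma c2_eq_coordinates: "(Z::c2) = Z$1 *s unit1 + Z$2 *s unit2"
  by (simp add: vec_eq_iff forall_2)

lemma norm_c2: "norm (Z::c2) = sqrt ((cmod (Z$1))\<^sup>2 + (cmod (Z$2))\<^sup>2)"
  by (simp add: norm_vec_def L2_set_def sum_2)

lemma norm_unit1 [simp]: "norm unit1 = 1"
  by (simp add: norm_c2)

lemma norm_smult_c2: "norm (c *s (Z::c2)) = cmod c * norm Z"
proof -
  have "norm (c *s Z) = sqrt ((cmod c)\<^sup>2 * ((cmod (Z$1))\<^sup>2 + (cmod (Z$2))\<^sup>2))"
    unfolding norm_c2 by (simp add: norm_mult power_mult_distrib distrib_left)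
  also have "\<dots> = cmod c * norm Z" unfolding norm_c2 by (simp add: real_sqrt_mult)
  finally show ?thesis .
qed

lemma det2_add_right: "det2 v (X + Y) = det2 v X + det2 v Y"
  and det2_smult_right: "det2 v (c *s X) = c * det2 v X"
  by (simp_all add: det2_def algebra_simps)

lemma c2_eq_det2_comb:
  assumes "det2 v w \<noteq> 0"
  shows "Z = (det2 Z w / det2 v w) *s v + (det2 v Z / det2 v w) *s w"
proof -
  have cramer:
    "(d::complex) = a1*b2 - a2*b1 \<Longrightarrow> (c1*b2 - c2*b1)*a1 + (a1*c2 - a2*c1)*b1 = c1 * d"
    "(d::complex) = a1*b2 - a2*b1 \<Longrightarrow> (c1*b2 - c2*b1)*a2 + (a1*c2 - a2*c1)*b2 = c2 * d"
    for a1 a2 b1 b2 c1 c2 d by algebra+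
  let ?d = "v$1 * w$2 - v$2 * w$1"
  have d: "?d \<noteq> 0" using assms by (simp add: det2_def)
  have "Z$1 = ((Z$1 * w$2 - Z$2 * w$1) * v$1 + (v$1 * Z$2 - v$2 * Z$1) * w$1) / ?d"
    unfolding cramer(1)[OF refl] using d by simp
  moreover have "Z$2 = ((Z$1 * w$2 - Z$2 * w$1) * v$2 + (v$1 * Z$2 - v$2 * Z$1) * w$2) / ?d"
    unfolding cramer(2)[OF refl] using d by simp
  ultimately show ?thesis
    by (simp add: vec_eq_iff forall_2 det2_def add_divide_distrib mult.commute)
qed

lemma det2_eq_0_imp_smult:
  assumes "det2 v w = 0" "v \<noteq> 0"
  shows "\<exists>t. w = t *s v"
proof (cases "v$1 = 0")
  case True
  then have "v$2 \<noteq> 0" using assms(2) by (auto simp: vec_eq_iff forall_2)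
  then show ?thesis using assms True
    by (intro exI[of _ "w$2 / v$2"]) (auto simp: vec_eq_iff forall_2 det2_def field_simps)
next
  case False
  then show ?thesis using assms
    by (intro exI[of _ "w$1 / v$1"]) (auto simp: vec_eq_iff forall_2 det2_def field_simps)
qed

lemma det2_linear_dependence:
  "det2 u1 u2 *s u0 + det2 u2 u0 *s u1 + det2 u0 u1 *s u2 = 0"
  by (simp add: vec_eq_iff forall_2 det2_def algebra_simps)

lemma herm_self: "herm Y Y = complex_of_real ((norm Y)\<^sup>2)"
  by (simp add: herm_def sum_2 norm_c2 complex_mult_cnj cmod_power2)

lemma herm_self_eq_0_iff [simp]: "herm Y Y = 0 \<longleftrightarrow> Y = 0"
  by (simp add: herm_self)

lemma herm_comb_left: "herm (a *s u + b *s w) X = a * herm u X + b * herm w X"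
  by (simp add: herm_def sum_2 algebra_simps)

lemma herm_smult_right: "herm X (a *s u) = cnj a * herm X u"
  by (simp add: herm_def sum_2 algebra_simps)

lemma herm_zero_right [simp]: "herm X 0 = 0"
  by (simp add: herm_def)

section \<open>Positive semidefinite Hermitian forms\<close>

lemma psd_add_left: "psd_herm_form s \<Longrightarrow> s (X + Y) Z = s X Z + s Y Z"
  and psd_smult_left: "psd_herm_form s \<Longrightarrow> s (c *s X) Z = c * s X Z"
  and psd_conj_sym: "psd_herm_form s \<Longrightarrow> s Y X = cnj (s X Y)"
  and psd_Im_diag: "psd_herm_form s \<Longrightarrow> Im (s X X) = 0"
  and psd_Re_diag_nonneg: "psd_herm_form s \<Longrightarrow> 0 \<le> Re (s X X)"
  unfolding psd_herm_form_def by blast+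

lemma psd_add_right:
  assumes "psd_herm_form s" shows "s Z (X + Y) = s Z X + s Z Y"
proof -
  have "s Z (X + Y) = cnj (s X Z + s Y Z)"
    using psd_conj_sym[OF assms, of "X + Y" Z] psd_add_left[OF assms] by simp
  then show ?thesis using psd_conj_sym[OF assms, of X Z] psd_conj_sym[OF assms, of Y Z] by simp
qed

lemma psd_smult_right:
  assumes "psd_herm_form s" shows "s Z (c *s X) = cnj c * s Z X"
proof -
  have "s Z (c *s X) = cnj (c * s X Z)"
    using psd_conj_sym[OF assms, of "c *s X" Z] psd_smult_left[OF assms] by simp
  then show ?thesis using psd_conj_sym[OF assms, of X Z] by simp
qed

lemma psd_diag_real: "psd_herm_form s \<Longrightarrow> s X X = complex_of_real (Re (s X X))"
  by (simp add: complex_eq_iff psd_Im_diag)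

lemma psd_expand:
  assumes "psd_herm_form s"
  shows "s (a *s u + b *s w) (c *s u + d *s w) =
     a * cnj c * s u u + a * cnj d * s u w + b * cnj c * s w u + b * cnj d * s w w"
  using assms by (simp add: psd_add_left psd_add_right psd_smult_left psd_smult_right algebra_simps)

lemma psd_herm_form_zero: "psd_herm_form (\<lambda>_ _. 0)"
  by (simp add: psd_herm_form_def)

lemma psd_herm_form_scale:
  assumes s: "psd_herm_form s" and k: "0 \<le> k"
  shows "psd_herm_form (\<lambda>Z W. complex_of_real k * s Z W)"
  unfolding psd_herm_form_def
proof (intro conjI allI)
  fix X Y show "complex_of_real k * s Y X = cnj (complex_of_real k * s X Y)"
    by (simp add: psd_conj_sym[OF s, of X Y])
qed (use k in \<open>simp_all add: psd_add_left[OF s] psd_smult_left[OF s] psd_Im_diag[OF s]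
       psd_Re_diag_nonneg[OF s] distrib_left\<close>)

lemma psd_herm_form_add:
  assumes s: "psd_herm_form s" and t: "psd_herm_form t"
  shows "psd_herm_form (\<lambda>Z W. s Z W + t Z W)"
  unfolding psd_herm_form_def
proof (intro conjI allI)
  fix X Y show "s Y X + t Y X = cnj (s X Y + t X Y)"
    by (simp add: psd_conj_sym[OF s, of X Y] psd_conj_sym[OF t, of X Y])
qed (simp_all add: psd_add_left[OF s] psd_add_left[OF t] psd_smult_left[OF s] psd_smult_left[OF t]
       psd_Im_diag[OF s] psd_Im_diag[OF t] psd_Re_diag_nonneg[OF s] psd_Re_diag_nonneg[OF t]
       distrib_left)

lemma psd_Re_diag_add_smult:
  assumes a: "psd_herm_form s"
  shows "Re (s (X + c *s Y) (X + c *s Y))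
    = Re (s X X) + 2 * Re (cnj c * s X Y) + (cmod c)\<^sup>2 * Re (s Y Y)"
proof -
  have "s (X + c *s Y) (X + c *s Y) = s (1 *s X + c *s Y) (1 *s X + c *s Y)" by simp
  also have "\<dots> = s X X + cnj c * s X Y + c * s Y X + c * cnj c * s Y Y"
    unfolding psd_expand[OF a] by simp
  finally have e: "s (X + c *s Y) (X + c *s Y) = s X X + cnj c * s X Y + c * s Y X + c * cnj c * s Y Y" .
  have "c * cnj (s X Y) = cnj (cnj c * s X Y)" by simp
  then have "Re (c * s Y X) = Re (cnj c * s X Y)" unfolding psd_conj_sym[OF a, of X Y] by simp
  moreover have "Re (c * cnj c * s Y Y) = (cmod c)\<^sup>2 * Re (s Y Y)"
    by (subst psd_diag_real[OF a]) (simp add: complex_mult_cnj cmod_power2)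
  ultimately show ?thesis unfolding e by simp
qed

lemma psd_Re_diag_smult:
  assumes "psd_herm_form s"
  shows "Re (s (c *s X) (c *s X)) = (cmod c)\<^sup>2 * Re (s X X)"
proof -
  have "s (c *s X) (c *s X) = c * cnj c * s X X"
    by (simp add: psd_smult_left[OF assms] psd_smult_right[OF assms])
  also have "\<dots> = complex_of_real ((cmod c)\<^sup>2 * Re (s X X))"
    by (subst psd_diag_real[OF assms]) (simp add: complex_mult_cnj cmod_power2)
  finally show ?thesis by simp
qed

lemma nonneg_quadratic_imp_discriminant:
  fixes a b k :: real
  assumes "\<And>t. 0 \<le> a - 2 * t * k + t\<^sup>2 * k * b" "0 \<le> k" "0 \<le> b"
  shows "k \<le> a * b"
proof (cases "b > 0")
  case True
  have "0 \<le> a - 2 * (1/b) * k + (1/b)\<^sup>2 * k * b" by (rule assms(1))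
  also have "\<dots> = a - k / b" using True by (simp add: power2_eq_square field_simps)
  finally show ?thesis using True by (simp add: field_simps mult.commute)
next
  case False
  then have b: "b = 0" using assms(3) by simp
  show ?thesis
  proof (rule ccontr)
    assume "\<not> k \<le> a * b"
    then have k: "k > 0" using b by simp
    have "0 \<le> a - 2 * ((a+1)/(2*k)) * k + ((a+1)/(2*k))\<^sup>2 * k * b" by (rule assms(1))
    also have "\<dots> = -1" using k b by (simp add: field_simps)
    finally show False by simp
  qed
qed

lemma psd_cauchy_schwarz:
  assumes a: "psd_herm_form s"
  shows "(cmod (s X Y))\<^sup>2 \<le> Re (s X X) * Re (s Y Y)"
proof (rule nonneg_quadratic_imp_discriminant)
  fix t :: real
  let ?z = "s X Y"
  let ?c = "- (complex_of_real t * ?z)"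
  have "0 \<le> Re (s (X + ?c *s Y) (X + ?c *s Y))" by (rule psd_Re_diag_nonneg[OF a])
  also have "\<dots> = Re (s X X) + 2 * Re (cnj ?c * ?z) + (cmod ?c)\<^sup>2 * Re (s Y Y)"
    by (rule psd_Re_diag_add_smult[OF a])
  also have "Re (cnj ?c * ?z) = - t * (cmod ?z)\<^sup>2"
    unfolding cmod_power2 by (simp add: power2_eq_square algebra_simps)
  also have "(cmod ?c)\<^sup>2 = t\<^sup>2 * (cmod ?z)\<^sup>2"
    by (simp add: norm_mult power_mult_distrib)
  finally show "0 \<le> Re (s X X) - 2 * t * (cmod ?z)\<^sup>2 + t\<^sup>2 * (cmod ?z)\<^sup>2 * Re (s Y Y)"
    by (simp add: algebra_simps)
qed (simp_all add: psd_Re_diag_nonneg[OF a])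

lemma psd_Re_diag_eq_0_imp_zero:
  assumes a: "psd_herm_form s" and z: "Re (s X X) = 0"
  shows "s X Y = 0" "s Y X = 0"
proof -
  have "(cmod (s X Y))\<^sup>2 \<le> 0" using psd_cauchy_schwarz[OF a, of X Y] z by simp
  then show "s X Y = 0" by simp
  then show "s Y X = 0" using psd_conj_sym[OF a, of Y X] by simp
qed

lemma psd_norm_le_mult:
  assumes ps: "psd_herm_form s" and le: "\<forall>Z. Re (s Z Z) \<le> (N Z)\<^sup>2" and nn: "\<forall>Z. 0 \<le> N Z"
  shows "cmod (s X Y) \<le> N X * N Y"
proof (rule power2_le_imp_le)
  have "(cmod (s X Y))\<^sup>2 \<le> Re (s X X) * Re (s Y Y)" by (rule psd_cauchy_schwarz[OF ps])
  also have "\<dots> \<le> (N X)\<^sup>2 * (N Y)\<^sup>2" using le psd_Re_diag_nonneg[OF ps] by (intro mult_mono) auto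
  finally show "(cmod (s X Y))\<^sup>2 \<le> (N X * N Y)\<^sup>2" by (simp add: power_mult_distrib)
qed (use nn in simp)

lemma cseminorm_psd_sqrt:
  assumes a: "psd_herm_form s"
  shows "cseminorm (\<lambda>Z. sqrt (Re (s Z Z)))"
  unfolding cseminorm_def
proof (intro conjI allI)
  fix X Y
  let ?a = "Re (s X X)" and ?b = "Re (s Y Y)"
  have ab: "0 \<le> ?a" "0 \<le> ?b" using psd_Re_diag_nonneg[OF a] by auto
  have "Re (s (X + 1 *s Y) (X + 1 *s Y)) = ?a + 2 * Re (s X Y) + ?b"
    using psd_Re_diag_add_smult[OF a, of X 1 Y] by simp
  also have "Re (s X Y) \<le> cmod (s X Y)" by (rule complex_Re_le_cmod)
  also have "cmod (s X Y) \<le> sqrt ?a * sqrt ?b"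
    using psd_cauchy_schwarz[OF a, of X Y] ab by (metis norm_ge_zero real_le_rsqrt real_sqrt_mult)
  finally have "Re (s (X + Y) (X + Y)) \<le> (sqrt ?a + sqrt ?b)\<^sup>2"
    using ab by (simp add: power2_eq_square algebra_simps)
  then have "sqrt (Re (s (X + Y) (X + Y))) \<le> sqrt ((sqrt ?a + sqrt ?b)\<^sup>2)"
    by (rule real_sqrt_le_mono)
  then show "sqrt (Re (s (X + Y) (X + Y))) \<le> sqrt ?a + sqrt ?b" using ab by simp
next
  fix X and c :: complex
  show "sqrt (Re (s (c *s X) (c *s X))) = cmod c * sqrt (Re (s X X))"
    by (simp add: psd_Re_diag_smult[OF a] real_sqrt_mult)
qed

section \<open>Forms in coordinates\<close>

definition form_of_coeffs :: "complex \<times> complex \<times> complex \<times> complex \<Rightarrow> c2 \<Rightarrow> c2 \<Rightarrow> complex" where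
  "form_of_coeffs q Z W = Z$1 * cnj (W$1) * fst q + Z$1 * cnj (W$2) * fst (snd q)
     + Z$2 * cnj (W$1) * fst (snd (snd q)) + Z$2 * cnj (W$2) * snd (snd (snd q))"

definition coeffs :: "(c2 \<Rightarrow> c2 \<Rightarrow> complex) \<Rightarrow> complex \<times> complex \<times> complex \<times> complex" where
  "coeffs s = (s unit1 unit1, s unit1 unit2, s unit2 unit1, s unit2 unit2)"

definition form_det :: "(c2 \<Rightarrow> c2 \<Rightarrow> complex) \<Rightarrow> complex" where
  "form_det s = s unit1 unit1 * s unit2 unit2 - s unit1 unit2 * s unit2 unit1"

lemma psd_eq_form_of_coeffs: "psd_herm_form s \<Longrightarrow> s = form_of_coeffs (coeffs s)"
proof (intro ext)
  fix Z W assume a: "psd_herm_form s"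
  have "s Z W = s (Z$1 *s unit1 + Z$2 *s unit2) (W$1 *s unit1 + W$2 *s unit2)"
    by (simp only: c2_eq_coordinates[symmetric])
  also have "\<dots> = form_of_coeffs (coeffs s) Z W"
    unfolding psd_expand[OF a] by (simp add: form_of_coeffs_def coeffs_def algebra_simps)
  finally show "s Z W = form_of_coeffs (coeffs s) Z W" .
qed

lemma coeffs_form_of_coeffs [simp]: "coeffs (form_of_coeffs q) = q"
  by (simp add: coeffs_def form_of_coeffs_def)

lemma form_det_form_of_coeffs:
  "form_det (form_of_coeffs q) = fst q * snd (snd (snd q)) - fst (snd q) * fst (snd (snd q))"
  by (simp add: form_det_def form_of_coeffs_def)

lemma psd_herm_form_form_of_coeffs_iff:
  "psd_herm_form (form_of_coeffs q) \<longleftrightarrow>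
   (\<forall>X Y. form_of_coeffs q Y X = cnj (form_of_coeffs q X Y)) \<and>
   (\<forall>X. Im (form_of_coeffs q X X) = 0) \<and> (\<forall>X. 0 \<le> Re (form_of_coeffs q X X))"
proof -
  have "form_of_coeffs q (X + Y) Z = form_of_coeffs q X Z + form_of_coeffs q Y Z"
    "form_of_coeffs q (c *s X) Z = c * form_of_coeffs q X Z" for X Y Z c
    by (simp_all add: form_of_coeffs_def algebra_simps)
  then show ?thesis unfolding psd_herm_form_def by blast
qed

lemma continuous_on_form_of_coeffs: "continuous_on UNIV (\<lambda>q. form_of_coeffs q X Y)"
  unfolding form_of_coeffs_def by (intro continuous_intros)

lemma tendsto_form_of_coeffs:
  assumes "G \<longlonglongrightarrow> q" "Z \<longlonglongrightarrow> z" "W \<longlonglongrightarrow> w"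
  shows "(\<lambda>k. form_of_coeffs (G k) (Z k) (W k)) \<longlonglongrightarrow> form_of_coeffs q z w"
  unfolding form_of_coeffs_def by (intro tendsto_intros assms)

lemma psd_gram_det2:
  assumes "psd_herm_form s"
  shows "s u u * s w w - s u w * s w u = det2 u w * cnj (det2 u w) * form_det s"
proof -
  have gram_identity:
    "((a1::complex) * cnj a1 * q1 + a1 * cnj a2 * q2 + a2 * cnj a1 * q3 + a2 * cnj a2 * q4) *
       (b1 * cnj b1 * q1 + b1 * cnj b2 * q2 + b2 * cnj b1 * q3 + b2 * cnj b2 * q4)
      - (a1 * cnj b1 * q1 + a1 * cnj b2 * q2 + a2 * cnj b1 * q3 + a2 * cnj b2 * q4) *
       (b1 * cnj a1 * q1 + b1 * cnj a2 * q2 + b2 * cnj a1 * q3 + b2 * cnj a2 * q4)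
      = (a1 * b2 - a2 * b1) * (cnj a1 * cnj b2 - cnj a2 * cnj b1) * (q1 * q4 - q2 * q3)"
    for a1 a2 b1 b2 q1 q2 q3 q4 by algebra
  obtain q1 q2 q3 q4 where q: "coeffs s = (q1, q2, q3, q4)" by (cases "coeffs s") auto
  have e: "s = form_of_coeffs (q1, q2, q3, q4)" using psd_eq_form_of_coeffs[OF assms] unfolding q .
  have d: "form_det s = q1 * q4 - q2 * q3"
    unfolding e by (simp add: form_det_form_of_coeffs)
  show ?thesis
    unfolding d unfolding e form_of_coeffs_def det2_def fst_conv snd_conv
      complex_cnj_diff complex_cnj_mult
    by (rule gram_identity)
qed

lemma Re_form_det:
  assumes "psd_herm_form s"
  shows "Re (form_det s) = Re (s unit1 unit1) * Re (s unit2 unit2)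
    - (Re (s unit1 unit2))\<^sup>2 - (Im (s unit1 unit2))\<^sup>2"
proof -
  have "form_det s = complex_of_real (Re (s unit1 unit1)) * complex_of_real (Re (s unit2 unit2))
      - s unit1 unit2 * cnj (s unit1 unit2)"
    unfolding form_det_def using psd_diag_real[OF assms] psd_conj_sym[OF assms, of unit2 unit1]
    by metis
  then show ?thesis by (simp add: power2_eq_square)
qed

text \<open>\<open>A, B, x + i y\<close> are the entries of the Hermitian matrix \<open>[[A, x + i y], [x - i y, B]]\<close>:
  the determinant cannot stay at the same positive level along a segment of such
  matrices unless the segment is a point.\<close>
lemma herm2_det_midpoint_rigid:
  fixes A1 A2 B1 B2 x1 x2 y1 y2 d :: real
  assumes d: "d > 0" and A: "0 \<le> A1" "0 \<le> A2"
    and h1: "A1*B1 - x1\<^sup>2 - y1\<^sup>2 = d" and h2: "A2*B2 - x2\<^sup>2 - y2\<^sup>2 = d"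
    and h3: "((A1+A2)/2)*((B1+B2)/2) - ((x1+x2)/2)\<^sup>2 - ((y1+y2)/2)\<^sup>2 \<le> d"
  shows "A1 = A2 \<and> B1 = B2 \<and> x1 = x2 \<and> y1 = y2"
proof -
  have "A1 * B1 > 0" "A2 * B2 > 0" using h1 h2 d by (smt (verit) zero_le_power2)+
  then have A1p: "A1 > 0" and A2p: "A2 > 0" using A by (auto simp: zero_less_mult_iff)
  define Q where "Q = A1*B2 + A2*B1 - 2*x1*x2 - 2*y1*y2 - 2*d"
  have "((A1+A2)/2)*((B1+B2)/2) - ((x1+x2)/2)\<^sup>2 - ((y1+y2)/2)\<^sup>2
      = ((A1*B1 - x1\<^sup>2 - y1\<^sup>2) + (A2*B2 - x2\<^sup>2 - y2\<^sup>2) + Q + 2*d) / 4"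
    by (simp add: Q_def power2_eq_square field_simps)
  then have Q: "Q \<le> 0" using h3 h1 h2 by simp
  have "A1*A2*Q = A1\<^sup>2*(A2*B2) + A2\<^sup>2*(A1*B1) - 2*A1*A2*(x1*x2+y1*y2) - 2*A1*A2*d"
    by (simp add: Q_def power2_eq_square algebra_simps)
  also have "A2*B2 = d + x2\<^sup>2 + y2\<^sup>2" using h2 by simp
  also have "A1*B1 = d + x1\<^sup>2 + y1\<^sup>2" using h1 by simp
  also have "A1\<^sup>2*(d + x2\<^sup>2 + y2\<^sup>2) + A2\<^sup>2*(d + x1\<^sup>2 + y1\<^sup>2) - 2*A1*A2*(x1*x2+y1*y2) - 2*A1*A2*d
      = d*(A1-A2)\<^sup>2 + (A1*x2 - A2*x1)\<^sup>2 + (A1*y2 - A2*y1)\<^sup>2"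
    by (simp add: power2_eq_square algebra_simps)
  finally have iden: "A1*A2*Q = d*(A1-A2)\<^sup>2 + (A1*x2 - A2*x1)\<^sup>2 + (A1*y2 - A2*y1)\<^sup>2" .
  have "A1*A2*Q \<le> 0" using Q A1p A2p by (simp add: mult_nonneg_nonpos)
  moreover have "0 \<le> d*(A1-A2)\<^sup>2" using d by simp
  ultimately have "d*(A1-A2)\<^sup>2 = 0" "(A1*x2 - A2*x1)\<^sup>2 = 0" "(A1*y2 - A2*y1)\<^sup>2 = 0"
    unfolding iden using zero_le_power2[of "A1*x2 - A2*x1"] zero_le_power2[of "A1*y2 - A2*y1"]
    by linarith+
  then have AA: "A1 = A2" and xx: "x1 = x2" and yy: "y1 = y2" using d A1p by auto
  have "A1 * B1 = A1 * B2" using h1 h2 unfolding AA xx yy by linarith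
  then show ?thesis using A1p AA xx yy by simp
qed

lemma psd_eq_if_form_det_midpoint_le:
  assumes s: "psd_herm_form s" and t: "psd_herm_form t"
    and d: "0 < d" "Re (form_det s) = d" "Re (form_det t) = d"
    and mid: "Re (form_det (\<lambda>Z W. complex_of_real (1/2) * (s Z W + t Z W))) \<le> d"
  shows "s = t"
proof -
  let ?m = "\<lambda>Z W. complex_of_real (1/2) * (s Z W + t Z W)"
  have m: "psd_herm_form ?m" by (intro psd_herm_form_scale psd_herm_form_add s t) simp
  let ?A1 = "Re (s unit1 unit1)" and ?B1 = "Re (s unit2 unit2)"
    and ?x1 = "Re (s unit1 unit2)" and ?y1 = "Im (s unit1 unit2)"
  let ?A2 = "Re (t unit1 unit1)" and ?B2 = "Re (t unit2 unit2)"
    and ?x2 = "Re (t unit1 unit2)" and ?y2 = "Im (t unit1 unit2)"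
  have R: "?A1 = ?A2 \<and> ?B1 = ?B2 \<and> ?x1 = ?x2 \<and> ?y1 = ?y2"
  proof (rule herm2_det_midpoint_rigid[OF d(1)])
    show "0 \<le> ?A1" "0 \<le> ?A2" using psd_Re_diag_nonneg[OF s] psd_Re_diag_nonneg[OF t] by auto
    show "?A1 * ?B1 - ?x1\<^sup>2 - ?y1\<^sup>2 = d" using Re_form_det[OF s] d(2) by simp
    show "?A2 * ?B2 - ?x2\<^sup>2 - ?y2\<^sup>2 = d" using Re_form_det[OF t] d(3) by simp
    show "((?A1 + ?A2)/2) * ((?B1 + ?B2)/2) - ((?x1 + ?x2)/2)\<^sup>2 - ((?y1 + ?y2)/2)\<^sup>2 \<le> d"
      using mid Re_form_det[OF m] by simp
  qed
  have "s unit1 unit1 = t unit1 unit1" "s unit2 unit2 = t unit2 unit2"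
    using R psd_diag_real[OF s] psd_diag_real[OF t] by metis+
  moreover have "s unit1 unit2 = t unit1 unit2" using R by (simp add: complex_eq_iff)
  moreover then have "s unit2 unit1 = t unit2 unit1"
    using psd_conj_sym[OF s, of unit1 unit2] psd_conj_sym[OF t, of unit1 unit2] by simp
  ultimately have "coeffs s = coeffs t" by (simp add: coeffs_def)
  then show "s = t" using psd_eq_form_of_coeffs[OF s] psd_eq_form_of_coeffs[OF t] by metis
qed

lemma norm_coeffs_le:
  assumes s: "psd_herm_form s" and le: "\<forall>Z. Re (s Z Z) \<le> (N Z)\<^sup>2" and nn: "\<forall>Z. 0 \<le> N Z"
  shows "norm (coeffs s) \<le> (N unit1 + N unit2)\<^sup>2"
proof -
  have b: "cmod (s X Y) \<le> N X * N Y" for X Y by (rule psd_norm_le_mult[OF s le nn])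
  have "norm (coeffs s) \<le> cmod (s unit1 unit1)
      + (cmod (s unit1 unit2) + (cmod (s unit2 unit1) + cmod (s unit2 unit2)))"
    unfolding coeffs_def by (meson add_left_mono norm_Pair_le order_trans)
  also have "\<dots> \<le> (N unit1 + N unit2)\<^sup>2"
    using b[of unit1 unit1] b[of unit1 unit2] b[of unit2 unit1] b[of unit2 unit2]
    by (simp add: power2_eq_square algebra_simps)
  finally show ?thesis .
qed

lemma closed_psd_coeffs: "closed {q. psd_herm_form (form_of_coeffs q)}"
  unfolding psd_herm_form_form_of_coeffs_iff Collect_conj_eq
  by (intro closed_Int closed_Collect_all closed_Collect_eq closed_Collect_le
      continuous_on_form_of_coeffs continuous_intros)

lemma compact_psd_coeffs_le:
  assumes "\<forall>Z. 0 \<le> N Z"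
  shows "compact {q. psd_herm_form (form_of_coeffs q) \<and> (\<forall>Z. Re (form_of_coeffs q Z Z) \<le> (N Z)\<^sup>2)}"
    (is "compact ?K")
proof -
  have "?K = {q. psd_herm_form (form_of_coeffs q)} \<inter> {q. \<forall>Z. Re (form_of_coeffs q Z Z) \<le> (N Z)\<^sup>2}"
    by auto
  moreover have "closed \<dots>"
    by (intro closed_Int closed_psd_coeffs closed_Collect_all closed_Collect_le
        continuous_on_form_of_coeffs continuous_intros)
  moreover have "norm q \<le> (N unit1 + N unit2)\<^sup>2" if "q \<in> ?K" for q
    using norm_coeffs_le[of "form_of_coeffs q" N] that assms by simp
  then have "bounded ?K" unfolding bounded_iff by blast
  ultimately show ?thesis by (simp add: compact_eq_bounded_closed)
qed

text \<open>The form of rank at most one with kernel \<open>v\<close> and value \<open>c\<close> at \<open>(u, u)\<close>.\<close>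
definition rank_one_form :: "c2 \<Rightarrow> c2 \<Rightarrow> real \<Rightarrow> c2 \<Rightarrow> c2 \<Rightarrow> complex" where
  "rank_one_form v u c Z W = complex_of_real c * (det2 v Z / det2 v u) * cnj (det2 v W / det2 v u)"

lemma rank_one_form_diag:
  "rank_one_form v u c Z Z = complex_of_real (c * (cmod (det2 v Z / det2 v u))\<^sup>2)"
  by (simp only: rank_one_form_def mult.assoc complex_norm_square[symmetric] of_real_mult)

lemma Re_rank_one_form_diag:
  "Re (rank_one_form v u c Z Z) = c * (cmod (det2 v Z / det2 v u))\<^sup>2"
  by (simp add: rank_one_form_diag)

lemma Re_rank_one_form_base: "det2 v u \<noteq> 0 \<Longrightarrow> Re (rank_one_form v u c u u) = c"
  by (simp add: Re_rank_one_form_diag)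

lemma psd_herm_form_rank_one:
  assumes "0 \<le> c"
  shows "psd_herm_form (rank_one_form v u c)"
  unfolding psd_herm_form_def
proof (intro conjI allI)
  fix X Y Z :: c2 and a :: complex
  show "rank_one_form v u c (X + Y) Z = rank_one_form v u c X Z + rank_one_form v u c Y Z"
    by (simp add: rank_one_form_def det2_add_right add_divide_distrib algebra_simps)
  show "rank_one_form v u c (a *s X) Z = a * rank_one_form v u c X Z"
    by (simp add: rank_one_form_def det2_smult_right)
  show "rank_one_form v u c Y X = cnj (rank_one_form v u c X Y)"
    by (simp add: rank_one_form_def ac_simps)
  show "Im (rank_one_form v u c X X) = 0" "0 \<le> Re (rank_one_form v u c X X)"
    using assms by (simp_all add: rank_one_form_diag)
qed

lemma psd_eq_rank_one_form:
  assumes s: "psd_herm_form s" and v: "Re (s v v) = 0" and u: "det2 v u \<noteq> 0"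
  shows "s = rank_one_form v u (Re (s u u))"
proof (intro ext)
  fix Z W
  let ?\<alpha> = "\<lambda>Z. det2 Z u / det2 v u" and ?\<beta> = "\<lambda>Z. det2 v Z / det2 v u"
  have "s Z W = s (?\<alpha> Z *s v + ?\<beta> Z *s u) (?\<alpha> W *s v + ?\<beta> W *s u)"
    using c2_eq_det2_comb[OF u] by metis
  also have "\<dots> = ?\<beta> Z * cnj (?\<beta> W) * s u u"
    unfolding psd_expand[OF s] using psd_Re_diag_eq_0_imp_zero[OF s v] by simp
  finally show "s Z W = rank_one_form v u (Re (s u u)) Z W"
    by (subst (asm) psd_diag_real[OF s]) (simp add: rank_one_form_def)
qed

section \<open>Seminorms on \<open>\<complex>\<^sup>2\<close>\<close>

lemma cseminorm_smult: "cseminorm p \<Longrightarrow> p (c *s X) = cmod c * p X"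
  and cseminorm_triangle: "cseminorm p \<Longrightarrow> p (X + Y) \<le> p X + p Y"
  unfolding cseminorm_def by blast+

lemma cseminorm_zero: "cseminorm p \<Longrightarrow> p 0 = 0"
  using cseminorm_smult[of p 0 0] by simp

lemma cseminorm_minus: "cseminorm p \<Longrightarrow> p (- X) = p X"
  using cseminorm_smult[of p "-1" X] by (simp add: vec_eq_iff)

lemma cseminorm_nonneg: assumes "cseminorm p" shows "0 \<le> p X"
  using cseminorm_triangle[OF assms, of X "- X"] cseminorm_zero[OF assms]
    cseminorm_minus[OF assms] by simp

lemma cseminorm_comb_le: assumes "cseminorm p"
  shows "p (a *s u + b *s w) \<le> cmod a * p u + cmod b * p w"
  using cseminorm_triangle[OF assms, of "a *s u" "b *s w"] cseminorm_smult[OF assms] by simp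

lemma cseminorm_diff_le: assumes "cseminorm p" shows "p (X - Y) \<le> p X + p Y"
  using cseminorm_triangle[OF assms, of X "- Y"] cseminorm_minus[OF assms, of Y] by simp

lemma cseminorm_abs_diff_le: assumes "cseminorm p" shows "\<bar>p X - p Y\<bar> \<le> p (X - Y)"
  using cseminorm_triangle[OF assms, of "X - Y" Y] cseminorm_triangle[OF assms, of "Y - X" X]
    cseminorm_minus[OF assms, of "X - Y"] by simp

lemma cseminorm_const_zero: "cseminorm (\<lambda>_. 0)"
  by (simp add: cseminorm_def)

lemma cseminorm_scale: assumes "cseminorm p" "0 \<le> k" shows "cseminorm (\<lambda>X. k * p X)"
  unfolding cseminorm_def
proof (intro conjI allI)
  fix X Y show "k * p (X + Y) \<le> k * p X + k * p Y"
    using mult_left_mono[OF cseminorm_triangle[OF assms(1), of X Y] assms(2)] by (simp add: distrib_left)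
qed (use cseminorm_smult[OF assms(1)] in simp)

lemma cseminorm_le_norm: assumes "cseminorm N" shows "N Z \<le> (N unit1 + N unit2) * norm Z"
proof -
  have "N Z = N (Z$1 *s unit1 + Z$2 *s unit2)" using c2_eq_coordinates[of Z] by simp
  also have "\<dots> \<le> cmod (Z$1) * N unit1 + cmod (Z$2) * N unit2" by (rule cseminorm_comb_le[OF assms])
  also have "\<dots> \<le> norm Z * N unit1 + norm Z * N unit2"
    using Finite_Cartesian_Product.norm_nth_le[of Z 1] Finite_Cartesian_Product.norm_nth_le[of Z 2] cseminorm_nonneg[OF assms]
    by (intro add_mono mult_right_mono) auto
  finally show ?thesis by (simp add: algebra_simps)
qed

lemma continuous_on_cseminorm:
  assumes N: "cseminorm N"
  shows "continuous_on UNIV N"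
proof (rule lipschitz_on_continuous_on)
  show "(N unit1 + N unit2)-lipschitz_on UNIV N"
  proof (rule lipschitz_onI)
    fix Z W :: c2
    have "\<bar>N Z - N W\<bar> \<le> N (Z - W)" by (rule cseminorm_abs_diff_le[OF N])
    also have "\<dots> \<le> (N unit1 + N unit2) * norm (Z - W)" by (rule cseminorm_le_norm[OF N])
    finally show "dist (N Z) (N W) \<le> (N unit1 + N unit2) * dist Z W" by (simp add: dist_norm)
  qed (use cseminorm_nonneg[OF N] in simp)
qed

lemma cseminorm_definite_ge_norm:
  assumes N: "cseminorm N" and definite: "\<forall>Z. N Z = 0 \<longrightarrow> Z = 0"
  shows "\<exists>c>0. \<forall>Z. c * norm Z \<le> N Z"
proof -
  have "\<exists>Z0\<in>sphere 0 1. \<forall>Z\<in>sphere 0 1. N Z0 \<le> N Z"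
    by (rule continuous_attains_inf[OF compact_sphere])
       (use continuous_on_subset[OF continuous_on_cseminorm[OF N]] in \<open>auto intro: exI[of _ unit1]\<close>)
  then obtain Z0 where Z0: "norm Z0 = 1" "\<forall>Z. norm Z = 1 \<longrightarrow> N Z0 \<le> N Z" by auto
  have "Z0 \<noteq> 0" using Z0 by auto
  then have c: "N Z0 > 0" using definite cseminorm_nonneg[OF N, of Z0] by (metis order_neq_le_trans)
  have "N Z0 * norm Z \<le> N Z" for Z
  proof (cases "Z = 0")
    case True then show ?thesis using cseminorm_nonneg[OF N] by simp
  next
    case False
    let ?r = "norm Z"
    let ?Z' = "complex_of_real (1 / ?r) *s Z"
    have "norm ?Z' = 1" using False by (simp add: norm_smult_c2 norm_divide)
    then have "N Z0 \<le> N ?Z'" using Z0 by blast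
    moreover have "Z = complex_of_real ?r *s ?Z'" using False by (simp add: vector_smult_assoc)
    then have "N Z = ?r * N ?Z'" using cseminorm_smult[OF N, of "complex_of_real ?r" ?Z'] by simp
    ultimately show ?thesis using mult_left_mono[of "N Z0" "N ?Z'" ?r] by (simp add: mult.commute)
  qed
  then show ?thesis using c by blast
qed

lemma cseminorm_kernel_cases:
  assumes N: "cseminorm N"
  obtains "\<forall>Z. N Z = 0"
    | v where "v \<noteq> 0" "N v = 0" "\<forall>w. N w = 0 \<longrightarrow> (\<exists>t. w = t *s v)"
    | "\<forall>Z. N Z = 0 \<longrightarrow> Z = 0"
proof (cases "\<exists>v. v \<noteq> 0 \<and> N v = 0")
  case True
  then obtain v where v: "v \<noteq> 0" "N v = 0" by blast
  show ?thesis
  proof (cases "\<exists>w. N w = 0 \<and> det2 v w \<noteq> 0")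
    case True
    then obtain w where w: "N w = 0" "det2 v w \<noteq> 0" by blast
    have "N Z = 0" for Z
    proof -
      have "N Z = N ((det2 Z w / det2 v w) *s v + (det2 v Z / det2 v w) *s w)"
        using c2_eq_det2_comb[OF w(2), of Z] by simp
      also have "\<dots> \<le> 0" using cseminorm_comb_le[OF N] v w by (metis add_0 mult_zero_right)
      finally show "N Z = 0" using cseminorm_nonneg[OF N, of Z] by simp
    qed
    then show ?thesis using that(1) by blast
  next
    case False
    then show ?thesis using that(2)[OF v] det2_eq_0_imp_smult[OF _ v(1)] by blast
  qed
qed (use that(3) in blast)

lemma cseminorm_add_kernel:
  assumes N: "cseminorm N" and v: "N v = 0"
  shows "N (x *s v + y *s u) = cmod y * N u"
proof -
  have "N (x *s v + y *s u) \<le> cmod x * N v + cmod y * N u" by (rule cseminorm_comb_le[OF N])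
  moreover have "N (y *s u) \<le> N (x *s v + y *s u) + N (x *s v)"
    using cseminorm_diff_le[OF N, of "x *s v + y *s u" "x *s v"] by simp
  ultimately show ?thesis using v cseminorm_smult[OF N] by (simp add: add_increasing)
qed

lemma cseminorm_line_kernel:
  assumes N: "cseminorm N" and v: "N v = 0" and u: "det2 v u \<noteq> 0"
  shows "N Z = cmod (det2 v Z / det2 v u) * N u"
  using cseminorm_add_kernel[OF N v] c2_eq_det2_comb[OF u, of Z] by metis

section \<open>The Wu seminorm and the set of admissible forms\<close>

lemma pseudometric_on_nonneg: "pseudometric_on D \<eta> \<Longrightarrow> a \<in> D \<Longrightarrow> 0 \<le> \<eta> a X"
  and pseudometric_on_smult: "pseudometric_on D \<eta> \<Longrightarrow> a \<in> D \<Longrightarrow> \<eta> a (c *s X) = cmod c * \<eta> a X"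
  unfolding pseudometric_on_def by blast+

lemma cseminorm_le_hat: "cseminorm p \<Longrightarrow> (\<forall>Y. p Y \<le> \<eta> a Y) \<Longrightarrow> p X \<le> hat \<eta> a X"
  unfolding hat_def by (rule cSup_upper) (auto intro: bdd_aboveI[of _ "\<eta> a X"])

context
  fixes D \<eta> a
  assumes pm: "pseudometric_on D \<eta>" and aD: "a \<in> D"
begin

lemma hat_le_least:
  assumes "\<And>p. cseminorm p \<Longrightarrow> \<forall>Y. p Y \<le> \<eta> a Y \<Longrightarrow> p X \<le> b"
  shows "hat \<eta> a X \<le> b"
  unfolding hat_def
  by (rule cSup_least) (use assms cseminorm_const_zero pseudometric_on_nonneg[OF pm aD] in auto)

lemma hat_le: "hat \<eta> a X \<le> \<eta> a X"
  by (rule hat_le_least) simp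

lemma hat_nonneg: "0 \<le> hat \<eta> a X"
  using cseminorm_le_hat[OF cseminorm_const_zero, of \<eta> a X] pseudometric_on_nonneg[OF pm aD] by simp

lemma hat_smult_le: "hat \<eta> a (c *s X) \<le> cmod c * hat \<eta> a X"
proof (rule hat_le_least)
  fix p assume p: "cseminorm p" "\<forall>Y. p Y \<le> \<eta> a Y"
  show "p (c *s X) \<le> cmod c * hat \<eta> a X"
    using cseminorm_smult[OF p(1)] cseminorm_le_hat[of p \<eta> a, OF p] by (simp add: mult_left_mono)
qed

lemma cseminorm_hat: "cseminorm (hat \<eta> a)"
  unfolding cseminorm_def
proof (intro conjI allI)
  fix X Y
  show "hat \<eta> a (X + Y) \<le> hat \<eta> a X + hat \<eta> a Y"
  proof (rule hat_le_least)
    fix p assume p: "cseminorm p" "\<forall>Y. p Y \<le> \<eta> a Y"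
    show "p (X + Y) \<le> hat \<eta> a X + hat \<eta> a Y"
      using cseminorm_triangle[OF p(1), of X Y] cseminorm_le_hat[of p \<eta> a, OF p] by (meson add_mono order_trans)
  qed
next
  fix X and c :: complex
  show "hat \<eta> a (c *s X) = cmod c * hat \<eta> a X"
  proof (cases "c = 0")
    case True
    then show ?thesis using hat_smult_le[of c X] hat_nonneg[of "c *s X"] by simp
  next
    case False
    have "cmod c * hat \<eta> a X = cmod c * hat \<eta> a (inverse c *s (c *s X))"
      using False by (simp add: vector_smult_assoc)
    also have "\<dots> \<le> cmod c * (cmod (inverse c) * hat \<eta> a (c *s X))"
      by (intro mult_left_mono hat_smult_le) simp
    also have "\<dots> = hat \<eta> a (c *s X)" using False by (simp add: norm_inverse)
    finally show ?thesis using hat_smult_le[of c X] by simp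
  qed
qed

lemma Fset_iff: "s \<in> Fset \<eta> a \<longleftrightarrow> psd_herm_form s \<and> (\<forall>Z. Re (s Z Z) \<le> (\<eta> a Z)\<^sup>2)"
  unfolding Fset_def using real_le_lsqrt sqrt_le_D pseudometric_on_nonneg[OF pm aD] by blast

text \<open>Admissibility only depends on the Wu seminorm, since \<open>\<surd>s(Z, Z)\<close> is itself a seminorm.\<close>
lemma Fset_iff_hat: "s \<in> Fset \<eta> a \<longleftrightarrow> psd_herm_form s \<and> (\<forall>Z. Re (s Z Z) \<le> (hat \<eta> a Z)\<^sup>2)"
proof
  assume s: "s \<in> Fset \<eta> a"
  then have ps: "psd_herm_form s" and le: "\<forall>X. sqrt (Re (s X X)) \<le> \<eta> a X"
    by (auto simp: Fset_def)
  have "sqrt (Re (s Z Z)) \<le> hat \<eta> a Z" for Z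
    using cseminorm_le_hat[of "\<lambda>Z. sqrt (Re (s Z Z))" \<eta> a, OF cseminorm_psd_sqrt[OF ps] le] .
  then have "Re (s Z Z) \<le> (hat \<eta> a Z)\<^sup>2" for Z by (rule sqrt_le_D)
  with ps show "psd_herm_form s \<and> (\<forall>Z. Re (s Z Z) \<le> (hat \<eta> a Z)\<^sup>2)" by blast
next
  assume "psd_herm_form s \<and> (\<forall>Z. Re (s Z Z) \<le> (hat \<eta> a Z)\<^sup>2)"
  then show "s \<in> Fset \<eta> a"
    unfolding Fset_iff using hat_le hat_nonneg by (meson order_trans power_mono)
qed

lemma Fset_hat_zero:
  assumes "\<forall>Z. hat \<eta> a Z = 0"
  shows "Fset \<eta> a = {\<lambda>_ _. 0}"
proof -
  have "s = (\<lambda>_ _. 0)" if "s \<in> Fset \<eta> a" for s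
  proof -
    have ps: "psd_herm_form s" and le: "\<forall>Z. Re (s Z Z) \<le> 0"
      using that assms unfolding Fset_iff_hat by auto
    have "Re (s Z Z) = 0" for Z using le psd_Re_diag_nonneg[OF ps, of Z] by (simp add: order_antisym)
    then show "s = (\<lambda>_ _. 0)" using psd_Re_diag_eq_0_imp_zero(1)[OF ps] by (auto simp: fun_eq_iff)
  qed
  moreover have "(\<lambda>_ _. 0) \<in> Fset \<eta> a" unfolding Fset_iff_hat using psd_herm_form_zero by simp
  ultimately show ?thesis by blast
qed

lemma Fset_midpoint:
  assumes "s \<in> Fset \<eta> a" "t \<in> Fset \<eta> a"
  shows "(\<lambda>Z W. complex_of_real (1/2) * (s Z W + t Z W)) \<in> Fset \<eta> a"
  unfolding Fset_iff_hat
proof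
  show "psd_herm_form (\<lambda>Z W. complex_of_real (1/2) * (s Z W + t Z W))"
    using assms unfolding Fset_iff_hat by (intro psd_herm_form_scale psd_herm_form_add) auto
  show "\<forall>Z. Re (complex_of_real (1/2) * (s Z Z + t Z Z)) \<le> (hat \<eta> a Z)\<^sup>2"
  proof
    fix Z
    have "Re (s Z Z) \<le> (hat \<eta> a Z)\<^sup>2" "Re (t Z Z) \<le> (hat \<eta> a Z)\<^sup>2"
      using assms unfolding Fset_iff_hat by auto
    then show "Re (complex_of_real (1/2) * (s Z Z + t Z Z)) \<le> (hat \<eta> a Z)\<^sup>2" by simp
  qed
qed

lemma Fset_form_det_attains_max:
  "\<exists>s\<in>Fset \<eta> a. \<forall>t\<in>Fset \<eta> a. Re (form_det t) \<le> Re (form_det s)"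
proof -
  define K where "K = {q. psd_herm_form (form_of_coeffs q)
    \<and> (\<forall>Z. Re (form_of_coeffs q Z Z) \<le> (hat \<eta> a Z)\<^sup>2)}"
  have FK: "form_of_coeffs q \<in> Fset \<eta> a \<longleftrightarrow> q \<in> K" for q
    unfolding K_def Fset_iff_hat by simp
  have "form_of_coeffs 0 = (\<lambda>_ _. 0)" by (simp add: form_of_coeffs_def fun_eq_iff)
  then have "0 \<in> K" unfolding K_def using psd_herm_form_zero by simp
  moreover have "compact K" unfolding K_def by (rule compact_psd_coeffs_le) (simp add: hat_nonneg)
  ultimately have "\<exists>q\<in>K. \<forall>p\<in>K. Re (form_det (form_of_coeffs p)) \<le> Re (form_det (form_of_coeffs q))"
    by (intro continuous_attains_sup) (auto simp: form_det_form_of_coeffs intro!: continuous_intros)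
  then obtain q where q: "form_of_coeffs q \<in> Fset \<eta> a"
    "\<forall>p\<in>K. Re (form_det (form_of_coeffs p)) \<le> Re (form_det (form_of_coeffs q))"
    using FK by blast
  have "Re (form_det t) \<le> Re (form_det (form_of_coeffs q))" if "t \<in> Fset \<eta> a" for t
  proof -
    have "t = form_of_coeffs (coeffs t)"
      using that psd_eq_form_of_coeffs unfolding Fset_iff_hat by blast
    then show ?thesis using q(2) that FK by metis
  qed
  then show ?thesis using q(1) by blast
qed

end

section \<open>Bases of subspaces of \<open>\<complex>\<^sup>2\<close>\<close>

lemma sum_lessThan_2: "(\<Sum>j<(2::nat). f j) = f 0 + f 1"
  by (simp add: numeral_2_eq_2)

lemma sum_delta_smult: "j < (m::nat) \<Longrightarrow> (\<Sum>k<m. (if k = j then c else 0) *s (e k :: c2)) = c *s e j"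
  by (simp add: if_distrib[of "\<lambda>x. x *s _"] cong: if_cong)

lemma sum_two_smult:
  assumes "i \<noteq> j" "i < (m::nat)" "j < m"
  shows "(\<Sum>k<m. (if k = i then a else if k = j then b else 0) *s (e k :: c2)) = a *s e i + b *s e j"
proof -
  have "(\<Sum>k<m. (if k = i then a else if k = j then b else 0) *s e k) =
        (\<Sum>k<m. (if k = i then a *s e i else 0) + (if k = j then b *s e j else 0))"
    by (rule sum.cong) (use assms in auto)
  also have "\<dots> = a *s e i + b *s e j" using assms by (simp add: sum.distrib)
  finally show ?thesis .
qed

lemma cbasis_indep: "cbasis U m e \<Longrightarrow> (\<Sum>j<m. c j *s e j) = 0 \<Longrightarrow> j < m \<Longrightarrow> c j = 0"
  and cbasis_span: "cbasis U m e \<Longrightarrow> U = {(\<Sum>j<m. c j *s e j) | c. True}"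
  unfolding cbasis_def by blast+

lemma cbasis_mem: assumes "cbasis U m e" "j < m" shows "e j \<in> U"
  unfolding cbasis_span[OF assms(1)]
  using sum_delta_smult[OF assms(2), of 1 e] by (auto intro!: exI[of _ "\<lambda>k. if k = j then 1 else 0"])

lemma cbasis_nonzero: assumes "cbasis U m e" "j < m" shows "e j \<noteq> 0"
proof
  assume "e j = 0"
  then have "(\<Sum>k<m. (if k = j then 1 else 0) *s e k) = 0"
    using sum_delta_smult[OF assms(2), of 1 e] by simp
  from cbasis_indep[OF assms(1) this assms(2)] show False by simp
qed

lemma cbasis_det2_nonzero:
  assumes cb: "cbasis U m e" and ij: "i \<noteq> j" "i < m" "j < m"
  shows "det2 (e i) (e j) \<noteq> 0"
proof
  assume "det2 (e i) (e j) = 0"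
  then obtain t where t: "e j = t *s e i" using det2_eq_0_imp_smult cbasis_nonzero[OF cb ij(2)] by blast
  let ?c = "\<lambda>k. if k = i then t else if k = j then - 1 else 0"
  have "(\<Sum>k<m. ?c k *s e k) = t *s e i + (- 1) *s e j" by (rule sum_two_smult[OF ij])
  also have "\<dots> = 0" using t by (simp add: vec_eq_iff)
  finally have "?c j = 0" by (rule cbasis_indep[OF cb _ ij(3)])
  with ij(1) show False by simp
qed

lemma cbasis_card_le_2: assumes cb: "cbasis U m e" shows "m \<le> 2"
proof (rule ccontr)
  assume "\<not> m \<le> 2"
  then have m: "3 \<le> m" by simp
  let ?c = "\<lambda>k::nat. if k = 0 then det2 (e 1) (e 2) else if k = 1 then det2 (e 2) (e 0)
                else if k = 2 then det2 (e 0) (e 1) else 0"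
  have "(\<Sum>k<m. ?c k *s e k) = (\<Sum>k\<in>{0,1,2}. ?c k *s e k)"
    by (rule sum.mono_neutral_right) (use m in auto)
  also have "\<dots> = 0" using det2_linear_dependence[of "e 1" "e 2" "e 0"] by (simp add: algebra_simps)
  finally have "?c 2 = 0" by (rule cbasis_indep[OF cb]) (use m in simp)
  moreover have "det2 (e 0) (e 1) \<noteq> 0" by (rule cbasis_det2_nonzero[OF cb]) (use m in auto)
  ultimately show False by simp
qed

lemma cbasis_UNIV: "cbasis UNIV 2 (\<lambda>j. if j = 0 then unit1 else unit2)"
  unfolding cbasis_def
proof (intro conjI allI impI)
  fix c :: "nat \<Rightarrow> complex" and j :: nat
  assume "(\<Sum>j<(2::nat). c j *s (if j = 0 then unit1 else unit2)) = 0" and j: "j < 2"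
  then have "c 0 = 0 \<and> c 1 = 0" by (simp add: sum_lessThan_2 vec_eq_iff forall_2)
  then show "c j = 0" using j by (cases j) (auto simp: numeral_2_eq_2 less_Suc_eq)
next
  have "Z = (\<Sum>j<(2::nat). (if j = 0 then Z$1 else Z$2) *s (if j = 0 then unit1 else unit2))" for Z :: c2
    using c2_eq_coordinates[of Z] by (simp add: sum_lessThan_2)
  then show "UNIV = {\<Sum>j<(2::nat). c j *s (if j = 0 then unit1 else unit2) |c. True}"
    by (auto intro: exI[where x="\<lambda>j. if j = 0 then _ $ 1 else _ $ 2"])
qed

lemma cbasis_UNIV_card:
  assumes cb: "cbasis UNIV m e"
  shows "m = 2" "det2 (e 0) (e 1) \<noteq> 0"
proof -
  have "m \<noteq> 0"
  proof
    assume "m = 0"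
    then have "(UNIV :: c2 set) = {0}" using cbasis_span[OF cb] by simp
    then show False by (metis UNIV_I norm_unit1 norm_zero singletonD zero_neq_one)
  qed
  moreover have "m \<noteq> 1"
  proof
    assume "m = 1"
    then have "\<exists>t. Z = t *s e 0" for Z using cbasis_span[OF cb] by auto
    then obtain t1 t2 where "unit1 = t1 *s e 0" "unit2 = t2 *s e 0" by metis
    moreover have "det2 (t1 *s e 0) (t2 *s e 0) = 0" by (simp add: det2_def algebra_simps)
    ultimately have "det2 unit1 unit2 = 0" by simp
    then show False by (simp add: det2_def)
  qed
  ultimately show "m = 2" using cbasis_card_le_2[OF cb] by linarith
  then show "det2 (e 0) (e 1) \<noteq> 0" by (intro cbasis_det2_nonzero[OF cb]) auto
qed

lemma cbasis_herm_orth: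
  assumes v: "v \<noteq> 0"
  shows "cbasis {Y. herm Y v = 0} 1 (\<lambda>_. \<chi> i. if i = 1 then cnj (v$2) else - cnj (v$1))"
proof -
  define w :: c2 where "w = (\<chi> i. if i = 1 then cnj (v$2) else - cnj (v$1))"
  have w: "w$1 = cnj (v$2)" "w$2 = - cnj (v$1)" by (simp_all add: w_def)
  have "w \<noteq> 0" using v by (auto simp: vec_eq_iff forall_2 w)
  moreover have "herm Y v = 0 \<longleftrightarrow> (\<exists>t. Y = t *s w)" for Y
  proof
    assume "herm Y v = 0"
    then have "det2 w Y = 0" by (simp add: herm_def sum_2 det2_def w algebra_simps)
    then show "\<exists>t. Y = t *s w" using det2_eq_0_imp_smult \<open>w \<noteq> 0\<close> by blast
  qed (auto simp: herm_def sum_2 w)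
  ultimately show ?thesis unfolding cbasis_def w_def[symmetric] by auto
qed

lemma cbasis_herm_orth_card:
  assumes v: "v \<noteq> 0" and cb: "cbasis {Y. herm Y v = 0} m e"
  shows "m = 1" "det2 v (e 0) \<noteq> 0"
proof -
  have "m \<noteq> 0"
  proof
    assume "m = 0"
    then have "{Y. herm Y v = 0} = {0}" using cbasis_span[OF cb] by simp
    then show False
      using cbasis_mem[OF cbasis_herm_orth[OF v], of 0] cbasis_nonzero[OF cbasis_herm_orth[OF v], of 0]
      by auto
  qed
  moreover have "m \<noteq> 2"
  proof
    assume m2: "m = 2"
    have d: "det2 (e 0) (e 1) \<noteq> 0" by (rule cbasis_det2_nonzero[OF cb]) (use m2 in auto)
    have h: "herm (e 0) v = 0" "herm (e 1) v = 0" using cbasis_mem[OF cb] m2 by auto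
    have "herm v v = 0"
      using c2_eq_det2_comb[OF d, of v] h herm_comb_left by (metis add.right_neutral mult_zero_right)
    with v show False by simp
  qed
  ultimately show m1: "m = 1" using cbasis_card_le_2[OF cb] by linarith
  show "det2 v (e 0) \<noteq> 0"
  proof
    assume "det2 v (e 0) = 0"
    then obtain t where t: "e 0 = t *s v" using det2_eq_0_imp_smult v by blast
    have "herm (e 0) v = 0" using cbasis_mem[OF cb] m1 by auto
    then have "t = 0" using t v herm_comb_left[of t v 0 v v] by simp
    then show False using t cbasis_nonzero[OF cb, of 0] m1 by simp
  qed
qed

lemma cbasis_Ubasis:
  assumes "cbasis (Uset \<eta> a) m e"
  shows "cbasis (Uset \<eta> a) (fst (Ubasis \<eta> a)) (snd (Ubasis \<eta> a))"
proof -
  have "case Ubasis \<eta> a of (m, e) \<Rightarrow> cbasis (Uset \<eta> a) m e"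
    unfolding Ubasis_def by (rule someI_ex) (use assms in auto)
  then show ?thesis by (simp add: case_prod_beta)
qed

lemma gram_det_1: "gram_det s 1 e = s (e 0) (e 0)"
  by (simp add: gram_det_def lessThan_Suc)

lemma gram_det_2: "gram_det s 2 e = s (e 0) (e 0) * s (e 1) (e 1) - s (e 0) (e 1) * s (e 1) (e 0)"
proof -
  have "{p. p permutes {..<2::nat}} = {id, Transposition.transpose 0 1}"
    by (auto simp: permutes_doubleton_iff numeral_2_eq_2 lessThan_Suc insert_commute)
  moreover have "id \<noteq> Transposition.transpose (0::nat) 1" by (metis id_apply transpose_apply_first zero_neq_one)
  ultimately show ?thesis
    by (simp add: gram_det_def sign_swap_id numeral_2_eq_2 lessThan_Suc algebra_simps)
qed

section \<open>The maximal admissible form\<close>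

context
  fixes D \<eta> a
  assumes pm: "pseudometric_on D \<eta>" and aD: "a \<in> D"
begin

context
  fixes v
  assumes v: "v \<noteq> 0" "hat \<eta> a v = 0" and line: "\<forall>w. hat \<eta> a w = 0 \<longrightarrow> (\<exists>t. w = t *s v)"
begin

lemma Uset_line_kernel: "Uset \<eta> a = {Y. herm Y v = 0}"
  unfolding Uset_def Vset_def using v(2) line by (auto simp: herm_smult_right)

lemma Ubasis_line_kernel: "fst (Ubasis \<eta> a) = 1" "det2 v (snd (Ubasis \<eta> a) 0) \<noteq> 0"
proof -
  have "cbasis (Uset \<eta> a) 1 (\<lambda>_. \<chi> i. if i = 1 then cnj (v$2) else - cnj (v$1))"
    unfolding Uset_line_kernel by (rule cbasis_herm_orth[OF v(1)])
  from cbasis_Ubasis[OF this] show "fst (Ubasis \<eta> a) = 1" "det2 v (snd (Ubasis \<eta> a) 0) \<noteq> 0"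
    using cbasis_herm_orth_card[OF v(1)] unfolding Uset_line_kernel by blast+
qed

lemma Fset_line_kernel_iff:
  assumes u: "det2 v u \<noteq> 0"
  shows "s \<in> Fset \<eta> a \<longleftrightarrow> (\<exists>c. 0 \<le> c \<and> c \<le> (hat \<eta> a u)\<^sup>2 \<and> s = rank_one_form v u c)"
proof
  assume "s \<in> Fset \<eta> a"
  then have s: "psd_herm_form s" and le: "\<forall>Z. Re (s Z Z) \<le> (hat \<eta> a Z)\<^sup>2"
    unfolding Fset_iff_hat[OF pm aD] by auto
  have "Re (s v v) = 0" using le[rule_format, of v] psd_Re_diag_nonneg[OF s, of v] v(2) by simp
  then have "s = rank_one_form v u (Re (s u u))" by (rule psd_eq_rank_one_form[OF s _ u])
  then show "\<exists>c. 0 \<le> c \<and> c \<le> (hat \<eta> a u)\<^sup>2 \<and> s = rank_one_form v u c"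
    using le psd_Re_diag_nonneg[OF s] by blast
next
  assume "\<exists>c. 0 \<le> c \<and> c \<le> (hat \<eta> a u)\<^sup>2 \<and> s = rank_one_form v u c"
  then obtain c where c: "0 \<le> c" "c \<le> (hat \<eta> a u)\<^sup>2" and s: "s = rank_one_form v u c" by blast
  have "Re (s Z Z) \<le> (hat \<eta> a Z)\<^sup>2" for Z
    unfolding s Re_rank_one_form_diag cseminorm_line_kernel[OF cseminorm_hat[OF pm aD] v(2) u, of Z]
    using mult_right_mono[OF c(2), of "(cmod (det2 v Z / det2 v u))\<^sup>2"]
    by (simp add: power_mult_distrib mult.commute)
  then show "s \<in> Fset \<eta> a"
    unfolding Fset_iff_hat[OF pm aD] s using psd_herm_form_rank_one[OF c(1)] by blast
qed

lemma line_kernel_maximal: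
  defines "u \<equiv> snd (Ubasis \<eta> a) 0"
  shows "s \<in> Fset \<eta> a \<and> (\<forall>t\<in>Fset \<eta> a. Fle \<eta> a t s) \<longleftrightarrow> s = rank_one_form v u ((hat \<eta> a u)\<^sup>2)"
proof -
  have u: "det2 v u \<noteq> 0" unfolding u_def by (rule Ubasis_line_kernel(2))
  obtain e where "Ubasis \<eta> a = (1, e)" using Ubasis_line_kernel(1) by (metis prod.collapse)
  then have Fle: "Fle \<eta> a t s \<longleftrightarrow> Re (t u u) \<le> Re (s u u)" for t s
    by (simp add: Fle_def u_def gram_det_1 gram_det_1[unfolded One_nat_def])
  have top: "rank_one_form v u ((hat \<eta> a u)\<^sup>2) \<in> Fset \<eta> a"
    unfolding Fset_line_kernel_iff[OF u] by (intro exI[of _ "(hat \<eta> a u)\<^sup>2"]) simp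
  show ?thesis
  proof
    assume max: "s \<in> Fset \<eta> a \<and> (\<forall>t\<in>Fset \<eta> a. Fle \<eta> a t s)"
    then obtain c where c: "c \<le> (hat \<eta> a u)\<^sup>2" "s = rank_one_form v u c"
      using Fset_line_kernel_iff[OF u] by blast
    have "(hat \<eta> a u)\<^sup>2 \<le> c" using max top Fle c(2) Re_rank_one_form_base[OF u] by metis
    then show "s = rank_one_form v u ((hat \<eta> a u)\<^sup>2)" using c by simp
  next
    assume s: "s = rank_one_form v u ((hat \<eta> a u)\<^sup>2)"
    show "s \<in> Fset \<eta> a \<and> (\<forall>t\<in>Fset \<eta> a. Fle \<eta> a t s)"
      using top Fset_line_kernel_iff[OF u] Fle Re_rank_one_form_base[OF u] unfolding s by auto
  qed
qed

lemma line_kernel_maximal_dominates: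
  assumes "s \<in> Fset \<eta> a" "s' \<in> Fset \<eta> a" "\<forall>t\<in>Fset \<eta> a. Fle \<eta> a t s'"
  shows "Re (s X X) \<le> Re (s' X X)"
proof -
  define u where "u = snd (Ubasis \<eta> a) 0"
  have u: "det2 v u \<noteq> 0" unfolding u_def by (rule Ubasis_line_kernel(2))
  obtain c where "0 \<le> c" "c \<le> (hat \<eta> a u)\<^sup>2" "s = rank_one_form v u c"
    using assms(1) Fset_line_kernel_iff[OF u] by blast
  moreover have "s' = rank_one_form v u ((hat \<eta> a u)\<^sup>2)"
    using line_kernel_maximal assms(2,3) u_def by blast
  ultimately show ?thesis by (simp add: Re_rank_one_form_diag mult_right_mono)
qed

end

context
  assumes definite: "\<forall>Z. hat \<eta> a Z = 0 \<longrightarrow> Z = 0"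
begin

lemma Ubasis_definite: "fst (Ubasis \<eta> a) = 2" "det2 (snd (Ubasis \<eta> a) 0) (snd (Ubasis \<eta> a) 1) \<noteq> 0"
proof -
  have U: "Uset \<eta> a = UNIV" using definite by (auto simp: Uset_def Vset_def)
  have "cbasis (Uset \<eta> a) (fst (Ubasis \<eta> a)) (snd (Ubasis \<eta> a))"
    by (rule cbasis_Ubasis) (use cbasis_UNIV in \<open>simp only: U\<close>)
  then show "fst (Ubasis \<eta> a) = 2" "det2 (snd (Ubasis \<eta> a) 0) (snd (Ubasis \<eta> a) 1) \<noteq> 0"
    unfolding U by (rule cbasis_UNIV_card)+
qed

lemma Fle_definite:
  assumes "psd_herm_form t" "psd_herm_form s"
  shows "Fle \<eta> a t s \<longleftrightarrow> Re (form_det t) \<le> Re (form_det s)"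
proof -
  obtain e where e: "Ubasis \<eta> a = (2, e)" "det2 (e 0) (e 1) \<noteq> 0"
    using Ubasis_definite by (metis prod.collapse)
  have "Re (gram_det r 2 e) = (cmod (det2 (e 0) (e 1)))\<^sup>2 * Re (form_det r)" if "psd_herm_form r" for r
    unfolding gram_det_2 psd_gram_det2[OF that] complex_norm_square[symmetric] by simp
  then show ?thesis using assms e by (simp add: Fle_def)
qed

lemma Fset_form_det_pos: "\<exists>s\<in>Fset \<eta> a. 0 < Re (form_det s)"
proof -
  obtain c where c: "c > 0" "\<forall>Z. c * norm Z \<le> hat \<eta> a Z"
    using cseminorm_definite_ge_norm[OF cseminorm_hat[OF pm aD] definite] by blast
  define s where "s Z W = complex_of_real (c\<^sup>2) * herm Z W" for Z W
  have "psd_herm_form herm"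
    unfolding psd_herm_form_def by (simp add: herm_def sum_2 herm_self[unfolded herm_def sum_2] algebra_simps)
  then have "psd_herm_form s" unfolding s_def by (rule psd_herm_form_scale) simp
  moreover have "Re (s Z Z) \<le> (hat \<eta> a Z)\<^sup>2" for Z
  proof -
    have "Re (s Z Z) = (c * norm Z)\<^sup>2" by (simp add: s_def herm_self power_mult_distrib)
    also have "\<dots> \<le> (hat \<eta> a Z)\<^sup>2" using c by (intro power_mono) auto
    finally show ?thesis .
  qed
  ultimately have "s \<in> Fset \<eta> a" unfolding Fset_iff_hat[OF pm aD] by blast
  moreover have "Re (form_det s) = c^4"
    by (simp add: form_det_def s_def herm_def sum_2 power2_eq_square power4_eq_xxxx)
  ultimately show ?thesis using c(1) by (metis zero_less_power)
qed

lemma definite_maximal: "\<exists>!s. s \<in> Fset \<eta> a \<and> (\<forall>t\<in>Fset \<eta> a. Fle \<eta> a t s)"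
proof -
  have psd: "psd_herm_form t" if "t \<in> Fset \<eta> a" for t
    using that unfolding Fset_iff_hat[OF pm aD] by blast
  obtain m where m: "m \<in> Fset \<eta> a" "\<forall>t\<in>Fset \<eta> a. Re (form_det t) \<le> Re (form_det m)"
    using Fset_form_det_attains_max[OF pm aD] by blast
  have maximal: "s \<in> Fset \<eta> a \<and> (\<forall>t\<in>Fset \<eta> a. Fle \<eta> a t s) \<longleftrightarrow>
      s \<in> Fset \<eta> a \<and> Re (form_det s) = Re (form_det m)" for s
  proof
    assume h: "s \<in> Fset \<eta> a \<and> (\<forall>t\<in>Fset \<eta> a. Fle \<eta> a t s)"
    then have "Re (form_det m) \<le> Re (form_det s)" using m(1) Fle_definite psd by blast
    then show "s \<in> Fset \<eta> a \<and> Re (form_det s) = Re (form_det m)"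
      using h m(2) by (meson order_antisym)
  next
    assume "s \<in> Fset \<eta> a \<and> Re (form_det s) = Re (form_det m)"
    then show "s \<in> Fset \<eta> a \<and> (\<forall>t\<in>Fset \<eta> a. Fle \<eta> a t s)"
      using m Fle_definite psd by auto
  qed
  show ?thesis
  proof (rule ex1I[of _ m])
    show "m \<in> Fset \<eta> a \<and> (\<forall>t\<in>Fset \<eta> a. Fle \<eta> a t m)" using maximal m(1) by blast
  next
    fix s assume "s \<in> Fset \<eta> a \<and> (\<forall>t\<in>Fset \<eta> a. Fle \<eta> a t s)"
    then have s: "s \<in> Fset \<eta> a" "Re (form_det s) = Re (form_det m)" using maximal[of s] by blast+
    show "s = m"
    proof (rule psd_eq_if_form_det_midpoint_le[OF psd[OF s(1)] psd[OF m(1)]])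
      show "0 < Re (form_det m)" using Fset_form_det_pos m(2) by fastforce
      show "Re (form_det s) = Re (form_det m)" by (rule s(2))
      show "Re (form_det (\<lambda>Z W. complex_of_real (1/2) * (s Z W + m Z W))) \<le> Re (form_det m)"
        using m(2) Fset_midpoint[OF pm aD s(1) m(1)] by blast
    qed simp
  qed
qed

end

lemma smax_ex1: "\<exists>!s. s \<in> Fset \<eta> a \<and> (\<forall>t\<in>Fset \<eta> a. Fle \<eta> a t s)"
proof (cases rule: cseminorm_kernel_cases[OF cseminorm_hat[OF pm aD]])
  case 1
  show ?thesis unfolding Fset_hat_zero[OF pm aD 1]
    by (rule ex1I[of _ "\<lambda>_ _. 0"]) (simp_all add: Fle_def split: prod.split)
next
  case (2 v)
  show ?thesis
    by (rule ex1I[of _ "rank_one_form v (snd (Ubasis \<eta> a) 0) ((hat \<eta> a (snd (Ubasis \<eta> a) 0))\<^sup>2)"])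
      (simp_all add: line_kernel_maximal[OF 2])
next
  case 3
  then show ?thesis by (rule definite_maximal)
qed

lemma smax_in_Fset: "smax \<eta> a \<in> Fset \<eta> a"
  and smax_maximal: "t \<in> Fset \<eta> a \<Longrightarrow> Fle \<eta> a t (smax \<eta> a)"
  using theI'[OF smax_ex1] unfolding smax_def by blast+

lemma smax_unique: "s \<in> Fset \<eta> a \<Longrightarrow> \<forall>t\<in>Fset \<eta> a. Fle \<eta> a t s \<Longrightarrow> s = smax \<eta> a"
  using smax_ex1 smax_in_Fset smax_maximal by blast

lemma psd_smax: "psd_herm_form (smax \<eta> a)"
  using smax_in_Fset by (simp add: Fset_def)

lemma Fset_dominated_by_smax:
  assumes "s \<in> Fset \<eta> a" "\<exists>Z. Z \<noteq> 0 \<and> hat \<eta> a Z = 0"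
  shows "Re (s X X) \<le> Re (smax \<eta> a X X)"
proof (cases rule: cseminorm_kernel_cases[OF cseminorm_hat[OF pm aD]])
  case 1
  then show ?thesis using assms(1) Fset_hat_zero[OF pm aD] psd_Re_diag_nonneg[OF psd_smax] by simp
next
  case (2 v)
  then show ?thesis
    using line_kernel_maximal_dominates[OF 2 assms(1) smax_in_Fset] smax_maximal by blast
next
  case 3
  then show ?thesis using assms(2) by blast
qed

end

section \<open>Upper semicontinuity\<close>

lemma upper_semicontinuous_onI_sequentially:
  fixes f :: "'a::first_countable_topology \<Rightarrow> real"
  assumes "\<And>x y. x \<in> S \<Longrightarrow> \<forall>n. y n \<in> S \<Longrightarrow> y \<longlonglongrightarrow> x \<Longrightarrow>
    \<exists>r L. strict_mono r \<and> (\<lambda>k. f (y (r k))) \<longlonglongrightarrow> L \<and> L \<le> f x"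
  shows "upper_semicontinuous_on S f"
  unfolding upper_semicontinuous_on_def
proof (intro ballI allI impI sequentially_imp_eventually_within)
  fix x e y assume x: "x \<in> S" and e: "0 < (e::real)" and y: "(\<forall>n. y n \<in> S \<and> y n \<noteq> x) \<and> y \<longlonglongrightarrow> x"
  show "\<forall>\<^sub>F n in sequentially. f (y n) < f x + e"
  proof (rule ccontr)
    assume "\<not> (\<forall>\<^sub>F n in sequentially. f (y n) < f x + e)"
    then have "infinite {n. f x + e \<le> f (y n)}"
      unfolding infinite_nat_iff_unbounded_le eventually_sequentially by (auto simp: not_less)
    then obtain r0 :: "nat \<Rightarrow> nat" where r0: "strict_mono r0" "\<And>n. f x + e \<le> f (y (r0 n))"
      using infinite_enumerate by blast
    have "(y \<circ> r0) \<longlonglongrightarrow> x" using LIMSEQ_subseq_LIMSEQ y r0(1) by blast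
    then obtain r L where r: "(\<lambda>k. f (y (r0 (r k)))) \<longlonglongrightarrow> L" "L \<le> f x"
      using assms[OF x, of "y \<circ> r0"] y by auto
    have "f x + e \<le> L" using r(1) r0(2) by (intro LIMSEQ_le_const) auto
    with r(2) e show False by simp
  qed
qed

context
  fixes D \<eta>
  assumes pm: "pseudometric_on D \<eta>"
begin

lemma pseudometric_le_from_sphere:
  assumes aD: "a \<in> D" and bD: "b \<in> D" and sphere: "\<And>Z. norm Z = 1 \<Longrightarrow> \<rho> * \<eta> a Z \<le> \<eta> b Z"
  shows "\<rho> * \<eta> a Z \<le> \<eta> b Z"
proof (cases "Z = 0")
  case True
  then show ?thesis
    using pseudometric_on_smult[OF pm aD, of 0 Z] pseudometric_on_smult[OF pm bD, of 0 Z] by simp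
next
  case False
  let ?n = "norm Z"
  let ?Z' = "complex_of_real (1 / ?n) *s Z"
  have "norm ?Z' = 1" using False by (simp add: norm_smult_c2 norm_divide)
  moreover have "Z = complex_of_real ?n *s ?Z'" using False by (simp add: vector_smult_assoc)
  then have "\<eta> a Z = ?n * \<eta> a ?Z'" "\<eta> b Z = ?n * \<eta> b ?Z'"
    using pseudometric_on_smult[OF pm aD, of "complex_of_real ?n" ?Z']
      pseudometric_on_smult[OF pm bD, of "complex_of_real ?n" ?Z'] by simp_all
  ultimately show ?thesis using mult_left_mono[OF sphere, of ?Z' ?n] by (simp add: algebra_simps)
qed

text \<open>By uniform continuity on \<open>cball a r \<times> sphere 0 1\<close>,
  \<open>\<eta> (b k) Z > \<eta> a Z - (1 - \<rho>) c \<ge> \<rho> \<eta> a Z\<close> on the unit sphere.\<close>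
lemma eventually_pseudometric_ge_scaled:
  assumes oD: "open D" and aD: "a \<in> D"
    and cont: "continuous_on (D \<times> UNIV) (\<lambda>(a, X). \<eta> a X)"
    and c: "c > 0" "\<forall>Z. c * norm Z \<le> \<eta> a Z"
    and bD: "\<forall>k. b k \<in> D" and b: "b \<longlonglongrightarrow> a" and \<rho>: "\<rho> < 1"
  shows "\<forall>\<^sub>F k in sequentially. \<forall>Z. \<rho> * \<eta> a Z \<le> \<eta> (b k) Z"
proof -
  obtain r where r: "r > 0" "cball a r \<subseteq> D" using oD aD open_contains_cball by blast
  let ?S = "cball a r \<times> sphere (0::c2) 1"
  have "continuous_on ?S (\<lambda>(a, X). \<eta> a X)"
    by (rule continuous_on_subset[OF cont]) (use r in auto)
  then have "uniformly_continuous_on ?S (\<lambda>(a, X). \<eta> a X)"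
    by (rule compact_uniformly_continuous) (simp add: compact_Times compact_sphere)
  moreover have "(1 - \<rho>) * c > 0" using \<rho> c by simp
  ultimately obtain d where d: "d > 0"
    "\<forall>x\<in>?S. \<forall>x'\<in>?S. dist x' x < d \<longrightarrow>
       dist ((\<lambda>(a, X). \<eta> a X) x') ((\<lambda>(a, X). \<eta> a X) x) < (1 - \<rho>) * c"
    unfolding uniformly_continuous_on_def by blast
  have "min d r > 0" using d(1) r(1) by simp
  then have "\<forall>\<^sub>F k in sequentially. dist (b k) a < min d r"
    using b by (auto simp: tendsto_iff simp del: min_less_iff_conj)
  then show ?thesis
  proof (rule eventually_mono)
    fix k assume k: "dist (b k) a < min d r"
    show "\<forall>Z. \<rho> * \<eta> a Z \<le> \<eta> (b k) Z"
    proof (intro allI, rule pseudometric_le_from_sphere[OF aD bD[rule_format]])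
      fix Z :: c2 assume Z: "norm Z = 1"
      have "dist (b k, Z) (a, Z) < d" using k by (simp add: dist_Pair_Pair)
      moreover have "(b k, Z) \<in> ?S" "(a, Z) \<in> ?S" using k Z r(1) by (auto simp: dist_commute)
      ultimately have "dist (\<eta> (b k) Z) (\<eta> a Z) < (1 - \<rho>) * c" using d(2) by fastforce
      moreover have "(1 - \<rho>) * c \<le> (1 - \<rho>) * \<eta> a Z"
        using c(2)[rule_format, of Z] Z \<rho> by (intro mult_left_mono) auto
      ultimately show "\<rho> * \<eta> a Z \<le> \<eta> (b k) Z"
        unfolding dist_real_def by (simp add: algebra_simps)
    qed
  qed
qed

lemma form_det_smax_scaled_le:
  assumes aD: "a \<in> D" and bD: "b \<in> D" and definite: "\<forall>Z. hat \<eta> a Z = 0 \<longrightarrow> Z = 0"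
    and \<rho>: "0 < \<rho>" and le: "\<forall>Z. \<rho> * \<eta> a Z \<le> \<eta> b Z"
  shows "\<rho>^4 * Re (form_det (smax \<eta> a)) \<le> Re (form_det (smax \<eta> b))"
proof -
  have hat_le: "\<rho> * hat \<eta> a Z \<le> hat \<eta> b Z" for Z
  proof (rule cseminorm_le_hat)
    show "cseminorm (\<lambda>Z. \<rho> * hat \<eta> a Z)" using cseminorm_scale[OF cseminorm_hat[OF pm aD]] \<rho> by simp
    show "\<forall>Y. \<rho> * hat \<eta> a Y \<le> \<eta> b Y"
      using le hat_le[OF pm aD] \<rho> by (meson less_eq_real_def mult_left_mono order_trans)
  qed
  have definite_b: "\<forall>Z. hat \<eta> b Z = 0 \<longrightarrow> Z = 0"
  proof (intro allI impI)
    fix Z assume "hat \<eta> b Z = 0"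
    then have "\<rho> * hat \<eta> a Z \<le> 0" using hat_le[of Z] by simp
    then have "hat \<eta> a Z = 0" using \<rho> hat_nonneg[OF pm aD, of Z] by (simp add: mult_le_0_iff)
    then show "Z = 0" using definite by blast
  qed
  define t where "t Z W = complex_of_real (\<rho>\<^sup>2) * smax \<eta> a Z W" for Z W
  have t: "psd_herm_form t" unfolding t_def by (rule psd_herm_form_scale[OF psd_smax[OF pm aD]]) simp
  have "Re (t Z Z) \<le> (\<eta> b Z)\<^sup>2" for Z
  proof -
    have "Re (t Z Z) = \<rho>\<^sup>2 * Re (smax \<eta> a Z Z)" by (simp add: t_def)
    also have "\<dots> \<le> \<rho>\<^sup>2 * (\<eta> a Z)\<^sup>2"
      using smax_in_Fset[OF pm aD] unfolding Fset_iff[OF pm aD] by (simp add: mult_left_mono)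
    also have "\<dots> \<le> (\<eta> b Z)\<^sup>2"
      using le \<rho> pseudometric_on_nonneg[OF pm aD] by (simp add: power_mult_distrib[symmetric] power_mono)
    finally show ?thesis .
  qed
  then have "t \<in> Fset \<eta> b" unfolding Fset_iff[OF pm bD] using t by blast
  then have "Re (form_det t) \<le> Re (form_det (smax \<eta> b))"
    using smax_maximal[OF pm bD] Fle_definite[OF pm bD definite_b t psd_smax[OF pm bD]] by blast
  moreover have "form_det t = complex_of_real (\<rho>^4) * form_det (smax \<eta> a)"
    by (simp add: form_det_def t_def power4_eq_xxxx power2_eq_square algebra_simps)
  ultimately show ?thesis by simp
qed

end

lemma Fset_limit_subseq:
  assumes pm: "pseudometric_on D \<eta>" and aD: "a \<in> D" and bD: "\<And>k. b k \<in> D"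
    and lim: "\<And>Z. (\<lambda>k. \<eta> (b k) Z) \<longlonglongrightarrow> \<eta> a Z" and S: "\<And>k. S k \<in> Fset \<eta> (b k)"
  shows "\<exists>r q. strict_mono r \<and> (\<lambda>k. coeffs (S (r k))) \<longlonglongrightarrow> q \<and> form_of_coeffs q \<in> Fset \<eta> a"
proof -
  have psd: "psd_herm_form (S k)" and le: "\<forall>Z. Re (S k Z Z) \<le> (\<eta> (b k) Z)\<^sup>2" for k
    using S unfolding Fset_iff[OF pm bD] by blast+
  have nn: "\<forall>Z. 0 \<le> \<eta> (b k) Z" for k using pseudometric_on_nonneg[OF pm bD] by blast
  obtain K1 K2 where K1: "\<And>k. norm (\<eta> (b k) unit1) \<le> K1" and K2: "\<And>k. norm (\<eta> (b k) unit2) \<le> K2"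
    using convergent_imp_Bseq[OF convergentI[OF lim]] unfolding Bseq_def by metis
  have "norm (coeffs (S k)) \<le> (K1 + K2)\<^sup>2" for k
  proof -
    have "norm (coeffs (S k)) \<le> (\<eta> (b k) unit1 + \<eta> (b k) unit2)\<^sup>2"
      by (rule norm_coeffs_le[OF psd le nn])
    also have "\<dots> \<le> (K1 + K2)\<^sup>2"
      using K1[of k] K2[of k] nn[of k] by (intro power_mono add_mono) auto
    finally show ?thesis .
  qed
  then have "bounded (range (\<lambda>k. coeffs (S k)))" unfolding bounded_iff by blast
  then obtain r q where r: "strict_mono r" and q: "(\<lambda>k. coeffs (S (r k))) \<longlonglongrightarrow> q"
    using bounded_imp_convergent_subsequence unfolding comp_def by blast
  have S_eq: "S k = form_of_coeffs (coeffs (S k))" for k by (rule psd_eq_form_of_coeffs[OF psd])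
  have "q \<in> {q. psd_herm_form (form_of_coeffs q)}"
    by (rule closed_sequentially[OF closed_psd_coeffs _ q]) (metis S_eq psd mem_Collect_eq)
  moreover have "Re (form_of_coeffs q Z Z) \<le> (\<eta> a Z)\<^sup>2" for Z
  proof (rule LIMSEQ_le)
    have "(\<lambda>k. Re (form_of_coeffs (coeffs (S (r k))) Z Z)) \<longlonglongrightarrow> Re (form_of_coeffs q Z Z)"
      by (intro tendsto_intros tendsto_form_of_coeffs q)
    then show "(\<lambda>k. Re (S (r k) Z Z)) \<longlonglongrightarrow> Re (form_of_coeffs q Z Z)"
      by (simp only: S_eq[symmetric])
    show "(\<lambda>k. (\<eta> (b (r k)) Z)\<^sup>2) \<longlonglongrightarrow> (\<eta> a Z)\<^sup>2"
      using LIMSEQ_subseq_LIMSEQ[OF lim r] by (intro tendsto_intros) (simp add: comp_def)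
  qed (use le in auto)
  ultimately show ?thesis using r q unfolding Fset_iff[OF pm aD] by blast
qed

context
  fixes D \<eta>
  assumes pm: "pseudometric_on D \<eta>" and oD: "open D"
    and cont: "continuous_on (D \<times> UNIV) (\<lambda>(a, X). \<eta> a X)"
begin

lemma pseudometric_tendsto:
  assumes "a \<in> D" "\<And>k. b k \<in> D" "b \<longlonglongrightarrow> a"
  shows "(\<lambda>k. \<eta> (b k) Z) \<longlonglongrightarrow> \<eta> a Z"
proof -
  have "(\<lambda>k. (\<lambda>(a, X). \<eta> a X) (b k, Z)) \<longlonglongrightarrow> (\<lambda>(a, X). \<eta> a X) (a, Z)"
    by (rule continuous_on_tendsto_compose[OF cont]) (use assms in \<open>auto intro!: tendsto_intros\<close>)
  then show ?thesis by simp
qed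

lemma smax_limit_definite:
  assumes aD: "a \<in> D" and definite: "\<forall>Z. hat \<eta> a Z = 0 \<longrightarrow> Z = 0"
    and bD: "\<And>k. b k \<in> D" and b: "b \<longlonglongrightarrow> a"
    and q: "(\<lambda>k. coeffs (smax \<eta> (b k))) \<longlonglongrightarrow> q" and qF: "form_of_coeffs q \<in> Fset \<eta> a"
  shows "form_of_coeffs q = smax \<eta> a"
proof -
  let ?s = "form_of_coeffs q"
  have psd_s: "psd_herm_form ?s" using qF unfolding Fset_iff[OF pm aD] by blast
  obtain c where c: "c > 0" "\<forall>Z. c * norm Z \<le> \<eta> a Z"
    using cseminorm_definite_ge_norm[OF cseminorm_hat[OF pm aD] definite] hat_le[OF pm aD]
    by (meson order_trans)
  have "(\<lambda>k. Re (form_det (form_of_coeffs (coeffs (smax \<eta> (b k)))))) \<longlonglongrightarrow> Re (form_det ?s)"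
    unfolding form_det_form_of_coeffs by (intro tendsto_intros q)
  then have det_lim: "(\<lambda>k. Re (form_det (smax \<eta> (b k)))) \<longlonglongrightarrow> Re (form_det ?s)"
    by (simp only: psd_eq_form_of_coeffs[OF psd_smax[OF pm bD], symmetric])
  have det_le: "Re (form_det (smax \<eta> a)) \<le> Re (form_det ?s)"
  proof (rule field_le_mult_one_interval)
    fix z :: real assume z: "0 < z" "z < 1"
    have "\<forall>\<^sub>F k in sequentially. \<forall>Z. root 4 z * \<eta> a Z \<le> \<eta> (b k) Z"
      using eventually_pseudometric_ge_scaled[OF pm oD aD cont c] bD b z by simp
    then have "\<forall>\<^sub>F k in sequentially. z * Re (form_det (smax \<eta> a)) \<le> Re (form_det (smax \<eta> (b k)))"
    proof (rule eventually_mono)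
      fix k assume "\<forall>Z. root 4 z * \<eta> a Z \<le> \<eta> (b k) Z"
      from form_det_smax_scaled_le[OF pm aD bD definite _ this] z
      show "z * Re (form_det (smax \<eta> a)) \<le> Re (form_det (smax \<eta> (b k)))"
        by (simp add: real_root_gt_zero)
    qed
    then show "z * Re (form_det (smax \<eta> a)) \<le> Re (form_det ?s)"
      by (rule tendsto_lowerbound[OF det_lim]) simp
  qed
  have "Fle \<eta> a t ?s" if t: "t \<in> Fset \<eta> a" for t
  proof -
    have psd_t: "psd_herm_form t" using t unfolding Fset_iff[OF pm aD] by blast
    have "Re (form_det t) \<le> Re (form_det (smax \<eta> a))"
      using smax_maximal[OF pm aD t] Fle_definite[OF pm aD definite psd_t psd_smax[OF pm aD]] by blast
    with det_le show ?thesis using Fle_definite[OF pm aD definite psd_t psd_s] by simp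
  qed
  then show ?thesis using smax_unique[OF pm aD qF] by blast
qed

lemma smax_diag_subseq_limit:
  assumes aD: "a \<in> D" and bD: "\<And>k. b k \<in> D" and b: "b \<longlonglongrightarrow> a" and Y: "Y \<longlonglongrightarrow> X"
  shows "\<exists>r L. strict_mono r \<and> (\<lambda>k. Re (smax \<eta> (b (r k)) (Y (r k)) (Y (r k)))) \<longlonglongrightarrow> L
    \<and> L \<le> Re (smax \<eta> a X X)"
proof -
  obtain r q where r: "strict_mono r" and q: "(\<lambda>k. coeffs (smax \<eta> (b (r k)))) \<longlonglongrightarrow> q"
    and qF: "form_of_coeffs q \<in> Fset \<eta> a"
    using Fset_limit_subseq[OF pm aD bD pseudometric_tendsto[OF aD bD b] smax_in_Fset[OF pm bD]]
    by blast
  have "(\<lambda>k. Re (form_of_coeffs (coeffs (smax \<eta> (b (r k)))) (Y (r k)) (Y (r k))))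
      \<longlonglongrightarrow> Re (form_of_coeffs q X X)"
    using LIMSEQ_subseq_LIMSEQ[OF Y r] unfolding comp_def
    by (intro tendsto_intros tendsto_form_of_coeffs q)
  then have "(\<lambda>k. Re (smax \<eta> (b (r k)) (Y (r k)) (Y (r k)))) \<longlonglongrightarrow> Re (form_of_coeffs q X X)"
    by (simp only: psd_eq_form_of_coeffs[OF psd_smax[OF pm bD], symmetric])
  moreover have "Re (form_of_coeffs q X X) \<le> Re (smax \<eta> a X X)"
  proof (cases "\<exists>Z. Z \<noteq> 0 \<and> hat \<eta> a Z = 0")
    case True
    then show ?thesis by (rule Fset_dominated_by_smax[OF pm aD qF])
  next
    case False
    have "(\<lambda>k. b (r k)) \<longlonglongrightarrow> a" using LIMSEQ_subseq_LIMSEQ[OF b r] by (simp add: comp_def)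
    with False have "form_of_coeffs q = smax \<eta> a"
      using smax_limit_definite[OF aD _ bD _ q qF] by blast
    then show ?thesis by simp
  qed
  ultimately show ?thesis using r by blast
qed

end

theorem proposition3p9:
  fixes D :: "(complex ^ 2) set" and \<eta> :: "complex ^ 2 \<Rightarrow> complex ^ 2 \<Rightarrow> real"
  assumes "is_domain D"
    and "\<eta> \<in> classM D"
    and "continuous_on (D \<times> UNIV) (\<lambda>(a, X). \<eta> a X)"
  shows "upper_semicontinuous_on (D \<times> UNIV) (\<lambda>(a, X). Wtilde \<eta> a X)"
proof (rule upper_semicontinuous_onI_sequentially)
  fix x and y :: "nat \<Rightarrow> c2 \<times> c2"
  assume "x \<in> D \<times> UNIV" and yD: "\<forall>n. y n \<in> D \<times> UNIV" and y: "y \<longlonglongrightarrow> x"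
  then obtain a X where x: "x = (a, X)" and aD: "a \<in> D" by auto
  have pm: "pseudometric_on D \<eta>" and oD: "open D"
    using assms(1,2) by (simp_all add: classM_def is_domain_def)
  have bD: "\<And>k. fst (y k) \<in> D" using yD by (auto simp: mem_Times_iff)
  have "(\<lambda>k. fst (y k)) \<longlonglongrightarrow> a" "(\<lambda>k. snd (y k)) \<longlonglongrightarrow> X"
    using tendsto_fst[OF y] tendsto_snd[OF y] unfolding x by simp_all
  then obtain r L where r: "strict_mono r"
    and L: "(\<lambda>k. Re (smax \<eta> (fst (y (r k))) (snd (y (r k))) (snd (y (r k))))) \<longlonglongrightarrow> L"
    and le: "L \<le> Re (smax \<eta> a X X)"
    using smax_diag_subseq_limit[OF pm oD assms(3) aD, where b = "\<lambda>k. fst (y k)" and Y = "\<lambda>k. snd (y k)"]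
      bD by blast
  have "(\<lambda>k. (\<lambda>(a, X). Wtilde \<eta> a X) (y (r k))) \<longlonglongrightarrow> sqrt L"
    unfolding Wtilde_def case_prod_beta by (rule tendsto_real_sqrt[OF L])
  moreover have "sqrt L \<le> (\<lambda>(a, X). Wtilde \<eta> a X) x" unfolding x Wtilde_def using le by simp
  ultimately show "\<exists>r L. strict_mono r \<and> (\<lambda>k. (\<lambda>(a, X). Wtilde \<eta> a X) (y (r k))) \<longlonglongrightarrow> L
      \<and> L \<le> (\<lambda>(a, X). Wtilde \<eta> a X) x"
    using r by blast
qed

end
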